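(* Consider the problem $\min_{x\in\mathbb{R}^d}F(x)$ with $F(x)=f_A(x)+\sum_{i=1}^d\psi_i(x^{(i)})$, under the assumptions in the context, and let $\theta^\star$ be a minimizer of $F$. If $S^2\ge \frac{M_iR_i}{p_i^2}$ for all $i$ and $1-\beta_t-\frac{\alpha_tR_i}{p_i}\ge0$ for all $i$ and $t$, then the sequences $(v_t),(x_t)$ generated by the generalized APCG algorithm satisfy, for all $t$, $$B_t\,\mathbb{E}\big[\|v_t-\theta^\star\|^2_{A^\dagger A}\big]+2A_t\big[\mathbb{E}[F(x_t)]-F(\theta^\star)\big]\le C_0,$$ where $C_0=B_0\|v_0-\theta^\star\|^2+2A_0[F(x_0)-F(\theta^\star)]$.
   Context: Setting. $A$ is a matrix with $d$ columns, $A^\dagger$ its pseudo-inverse, $\|u\|^2_{A^\dagger A}=u^TA^\dagger Au$, $e_i$ the unit vectors of $\mathbb{R}^d$, $x^{(i)}=e_i^Tx$, $R_i=e_i^TA^\dagger Ae_i$. Each $\psi_i:\mathbb{R}\to\mathbb{R}\cup\{+\infty\}$ is convex. $f_A:\mathbb{R}^d\to\mathbb{R}$ is differentiable and there is $\sigma_A\ge0$ with $f_A(x)-f_A(y)\ge\nabla f_A(y)^TA^\dagger A(x-y)+\frac{\sigma_A}{2}(x-y)^TA^\dagger A(x-y)$ for all $x,y$. $\nabla_if_A=e_ie_i^T\nabla f_A$, and $f_A$ is $M_i$-smooth in direction $i$ (its partial derivative along $e_i$ is $M_i$-Lipschitz along $e_i$). For every $i$, either $R_i=1$ or $\psi_i=0$.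 Coordinate $i$ is sampled with probability $p_i>0$, $\sum_ip_i=1$. Sequences. Fix $A_0\ge0$, $B_0>0$ and $S>0$; recursively $a_{t+1}>0$ solves $a_{t+1}^2S^2=A_{t+1}B_{t+1}$ with $A_{t+1}=A_t+a_{t+1}$, $B_{t+1}=B_t+\sigma_Aa_{t+1}$; $\alpha_t=a_{t+1}/A_{t+1}$, $\beta_t=\sigma_Aa_{t+1}/B_{t+1}$, $\eta_{i,t}=\frac{a_{t+1}}{B_{t+1}p_i}$, ${\rm prox}_{\eta\psi_i}(x)=\arg\min_v\frac{1}{2\eta}\|v-x\|^2+\psi_i(v)$. Generalized APCG. $x_0=v_0=0$. For $t=0,1,\dots$: $y_t=\frac{(1-\alpha_t)x_t+\alpha_t(1-\beta_t)v_t}{1-\alpha_t\beta_t}$; sample $i$ with probability $p_i$ independently of the past; $z_{t+1}=v_{t+1}=(1-\beta_t)v_t+\beta_ty_t-\eta_{i,t}\nabla_if_A(y_t)$; replace $v_{t+1}^{(i)}={\rm prox}_{\eta_{i,t}\psi_i}(z_{t+1}^{(i)})$; $x_{t+1}=y_t+\frac{\alpha_tR_i}{p_i}\big(v_{t+1}-(1-\beta_t)v_t-\beta_ty_t\big)$. *)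

theory Defs
  imports "HOL-Analysis.Analysis" "HOL-Library.Extended_Real"
begin

definition pseudo_inverse :: "real^'d^'m \<Rightarrow> real^'m^'d" where
  "pseudo_inverse A = (THE X. A ** X ** A = A \<and> X ** A ** X = X \<and>
       transpose (A ** X) = A ** X \<and> transpose (X ** A) = X ** A)"

definition sqnorm_P :: "real^'d^'d \<Rightarrow> real^'d \<Rightarrow> real" where
  "sqnorm_P P u = u \<bullet> (P *v u)"

definition convex_ext :: "(real \<Rightarrow> ereal) \<Rightarrow> bool" where
  "convex_ext \<psi> \<longleftrightarrow> (\<forall>x. \<psi> x \<noteq> -\<infinity>) \<and>
     (\<forall>x y u. 0 \<le> u \<and> u \<le> 1 \<longrightarrow>
        \<psi> (u * x + (1 - u) * y) \<le> ereal u * \<psi> x + ereal (1 - u) * \<psi> y)"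

definition is_prox :: "real \<Rightarrow> (real \<Rightarrow> ereal) \<Rightarrow> real \<Rightarrow> real \<Rightarrow> bool" where
  "is_prox \<eta> \<psi> x v \<longleftrightarrow>
     (\<forall>u. ereal (1 / (2 * \<eta>) * (v - x)^2) + \<psi> v \<le> ereal (1 / (2 * \<eta>) * (u - x)^2) + \<psi> u)"

definition prox :: "real \<Rightarrow> (real \<Rightarrow> ereal) \<Rightarrow> real \<Rightarrow> real" where
  "prox \<eta> \<psi> x = (SOME v. is_prox \<eta> \<psi> x v)"

text \<open>One step (iteration t, sampled coordinate i) of generalized APCG.
  Parameters: gradient of f_A, P = A^\<dagger> A, probabilities p, \<psi>, sequences a, A_t, B_t, \<sigma>_A.\<close>
definition apcg_step ::
  "(real^'d \<Rightarrow> real^'d) \<Rightarrow> real^'d^'d \<Rightarrow> ('d \<Rightarrow> real) \<Rightarrow> ('d \<Rightarrow> real \<Rightarrow> ereal) \<Rightarrow>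
   (nat \<Rightarrow> real) \<Rightarrow> (nat \<Rightarrow> real) \<Rightarrow> (nat \<Rightarrow> real) \<Rightarrow> real \<Rightarrow>
   nat \<Rightarrow> 'd \<Rightarrow> (real^'d) \<times> (real^'d) \<Rightarrow> (real^'d) \<times> (real^'d)" where
  "apcg_step grad P p \<psi> a As Bs \<sigma> t i xv =
    (let x = fst xv; v = snd xv;
         \<alpha> = a (Suc t) / As (Suc t);
         \<beta> = \<sigma> * a (Suc t) / Bs (Suc t);
         \<eta> = a (Suc t) / (Bs (Suc t) * p i);
         y = (1 / (1 - \<alpha> * \<beta>)) *\<^sub>R ((1 - \<alpha>) *\<^sub>R x + (\<alpha> * (1 - \<beta>)) *\<^sub>R v);
         w = (1 - \<beta>) *\<^sub>R v + \<beta> *\<^sub>R y;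
         z = w - (\<eta> * (grad y $ i)) *\<^sub>R axis i 1;
         v' = (\<chi> j. if j = i then prox \<eta> (\<psi> i) (z $ i) else z $ j);
         x' = y + (\<alpha> * (P $ i $ i) / p i) *\<^sub>R (v' - w)
     in (x', v'))"

text \<open>Trajectory (x_t, v_t) for a realisation \<omega> of the sampled indices (\<omega> t = index drawn at step t).\<close>
primrec apcg_run ::
  "(real^'d \<Rightarrow> real^'d) \<Rightarrow> real^'d^'d \<Rightarrow> ('d \<Rightarrow> real) \<Rightarrow> ('d \<Rightarrow> real \<Rightarrow> ereal) \<Rightarrow>
   (nat \<Rightarrow> real) \<Rightarrow> (nat \<Rightarrow> real) \<Rightarrow> (nat \<Rightarrow> real) \<Rightarrow> real \<Rightarrow>
   (nat \<Rightarrow> 'd) \<Rightarrow> nat \<Rightarrow> (real^'d) \<times> (real^'d)" where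
  "apcg_run grad P p \<psi> a As Bs \<sigma> \<omega> 0 = (0, 0)"
| "apcg_run grad P p \<psi> a As Bs \<sigma> \<omega> (Suc t) =
     apcg_step grad P p \<psi> a As Bs \<sigma> t (\<omega> t) (apcg_run grad P p \<psi> a As Bs \<sigma> \<omega> t)"

definition path_prob :: "('d \<Rightarrow> real) \<Rightarrow> nat \<Rightarrow> (nat \<Rightarrow> 'd) \<Rightarrow> real" where
  "path_prob p t \<omega> = (\<Prod>j<t. p (\<omega> j))"

definition paths :: "nat \<Rightarrow> (nat \<Rightarrow> 'd) set" where
  "paths t = PiE {..<t} (\<lambda>_. UNIV)"

end

(*
  The proof shows that the potential
    B_t |v_t - theta|^2_P + 2 A_t (f x_t + sum_j X_j - F theta),   P = A^+ A,
  does not increase in expectation, where the X_j are real upper bounds for psi_j (x_t^(j)).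
  In one step, the coordinate descent lemma together with S^2 >= M_i R_i / p_i^2 bounds f (x_{t+1}),
  the optimality inequality of the prox bounds the change of |v - theta|^2_P and of psi, and after
  averaging over the sampled coordinate the remaining linear terms are absorbed by strong convexity
  of f, because A_{t+1} y_t = A_t x_t + a_{t+1} w_t with w_t = (1 - beta_t) v_t + beta_t y_t.

  As psi_j may take the value infinity, psi_j (x_t^(j)) is never evaluated directly. Instead the pair
  (x_t^(j), X_j) is kept on a segment from (v_t^(j), V_j) into the epigraph of psi_j; the hat values
  undergo the same affine updates as the coordinates. The weight of the endpoint (v_t^(j), V_j) must
  not fall below alpha_{t-1} / p_j, since otherwise the sampled update leaves the epigraph; this is
  where 1 - beta_t - alpha_t R_i / p_i >= 0 and the recursion for a_t enter.
*)
theory Submission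
  imports Defs
begin

section \<open>Orthogonal projections and the Moore--Penrose pseudo-inverse\<close>

lemma transpose_eq_if_self_adjoint:
  fixes M :: "real^'n^'n"
  assumes "\<And>x y. (M *v x) \<bullet> y = x \<bullet> (M *v y)"
  shows "transpose M = M"
proof -
  have "transpose M *v x = M *v x" for x
    using assms by (metis vector_eq_rdot dot_lmul_matrix inner_commute vector_transpose_matrix)
  then show ?thesis by (simp add: matrix_eq)
qed

definition orthogonal_projection_onto :: "'a::real_inner set \<Rightarrow> ('a \<Rightarrow> 'a) \<Rightarrow> bool" where
  "orthogonal_projection_onto T pr \<longleftrightarrow> (\<forall>x. pr x \<in> T) \<and> (\<forall>x y. y \<in> T \<longrightarrow> (x - pr x) \<bullet> y = 0)"

lemma
  assumes "orthogonal_projection_onto T pr"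
  shows orthogonal_projection_in: "pr x \<in> T"
    and orthogonal_projection_residual: "y \<in> T \<Longrightarrow> (x - pr x) \<bullet> y = 0"
  using assms unfolding orthogonal_projection_onto_def by blast+

lemma orthogonal_projection_unique:
  assumes pr: "orthogonal_projection_onto T pr" and T: "subspace T"
    and u: "u \<in> T" and res: "\<And>y. y \<in> T \<Longrightarrow> (x - u) \<bullet> y = 0"
  shows "pr x = u"
proof -
  have d: "u - pr x \<in> T" using u T orthogonal_projection_in[OF pr] by (simp add: subspace_diff)
  have "(u - pr x) \<bullet> (u - pr x) = (x - pr x) \<bullet> (u - pr x) - (x - u) \<bullet> (u - pr x)"
    by (simp add: inner_diff_left)
  also have "\<dots> = 0" using orthogonal_projection_residual[OF pr d] res[OF d] by simp
  finally show ?thesis by simp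
qed

lemma orthogonal_projection_fixes:
  assumes "orthogonal_projection_onto T pr" "subspace T" "u \<in> T"
  shows "pr u = u"
  using orthogonal_projection_unique[OF assms] by simp

lemma orthogonal_projection_self_adjoint:
  assumes pr: "orthogonal_projection_onto T pr"
  shows "pr x \<bullet> y = x \<bullet> pr y"
proof -
  have "(y - pr y) \<bullet> pr x = 0" "(x - pr x) \<bullet> pr y = 0"
    using orthogonal_projection_residual[OF pr orthogonal_projection_in[OF pr]] by blast+
  then have "y \<bullet> pr x = pr y \<bullet> pr x" "x \<bullet> pr y = pr x \<bullet> pr y"
    by (simp_all add: inner_diff_left)
  then show ?thesis by (metis inner_commute)
qed

lemma orthogonal_projection_linear:
  assumes pr: "orthogonal_projection_onto T pr" and T: "subspace T"
  shows "linear pr"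
proof (rule linearI)
  fix x y :: 'a and c :: real
  show "pr (x + y) = pr x + pr y"
  proof (rule orthogonal_projection_unique[OF pr T])
    show "pr x + pr y \<in> T" using T orthogonal_projection_in[OF pr] by (simp add: subspace_add)
    show "(x + y - (pr x + pr y)) \<bullet> w = 0" if "w \<in> T" for w
      using orthogonal_projection_residual[OF pr that] by (simp add: algebra_simps inner_diff_left)
  qed
  show "pr (c *\<^sub>R x) = c *\<^sub>R pr x"
  proof (rule orthogonal_projection_unique[OF pr T])
    show "c *\<^sub>R pr x \<in> T" using T orthogonal_projection_in[OF pr] by (simp add: subspace_scale)
    show "(c *\<^sub>R x - c *\<^sub>R pr x) \<bullet> w = 0" if "w \<in> T" for w
      using orthogonal_projection_residual[OF pr that, of x]
      by (simp add: inner_diff_left flip: scaleR_diff_right)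
  qed
qed

lemma orthogonal_projection_exists:
  fixes T :: "'a::euclidean_space set"
  assumes "subspace T"
  obtains pr where "orthogonal_projection_onto T pr"
proof -
  have "\<exists>y z. y \<in> T \<and> (\<forall>w\<in>T. orthogonal z w) \<and> x = y + z" for x
    using orthogonal_subspace_decomp_exists[of T x] assms by (metis span_eq_iff)
  then obtain pr where "\<And>x. pr x \<in> T" "\<And>x w. w \<in> T \<Longrightarrow> (x - pr x) \<bullet> w = 0"
    by (metis add_diff_cancel_left' orthogonal_def)
  then show ?thesis using that unfolding orthogonal_projection_onto_def by blast
qed

definition penrose_conditions :: "real^'d^'m \<Rightarrow> real^'m^'d \<Rightarrow> bool" where
  "penrose_conditions A X \<longleftrightarrow> A ** X ** A = A \<and> X ** A ** X = X \<and>
     transpose (A ** X) = A ** X \<and> transpose (X ** A) = X ** A"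

lemma subspace_range_matrix_vector_mult: "subspace (range (\<lambda>x. (M::real^'n^'m) *v x))"
  using linear_subspace_image[OF matrix_vector_mul_linear[of M] subspace_UNIV] .

lemma subspace_range_vector_matrix_mult: "subspace (range (\<lambda>y. y v* (M::real^'n^'m)))"
  using subspace_range_matrix_vector_mult[of "transpose M"] by simp

lemma kernel_eq_orthogonal_row_space:
  fixes A :: "real^'d^'m"
  shows "A *v z = 0 \<longleftrightarrow> (\<forall>u \<in> range (\<lambda>y. y v* A). z \<bullet> u = 0)"
proof -
  have "z \<bullet> (y v* A) = (A *v z) \<bullet> y" for y
    by (metis dot_lmul_matrix inner_commute)
  then show ?thesis by (metis (mono_tags, lifting) inner_eq_zero_iff inner_zero_left rangeE rangeI)
qed

lemma matrix_vector_mult_row_space_projection: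
  fixes A :: "real^'d^'m"
  assumes "orthogonal_projection_onto (range (\<lambda>y. y v* A)) p1"
  shows "A *v p1 x = A *v x"
  using orthogonal_projection_residual[OF assms, of _ x] kernel_eq_orthogonal_row_space[of A "x - p1 x"]
  by (simp add: matrix_vector_mult_diff_distrib)

lemma row_space_left_inverse:
  fixes A :: "real^'d^'m"
  assumes p1: "orthogonal_projection_onto (range (\<lambda>y. y v* A)) p1"
  obtains g where "linear g" "range g \<subseteq> range (\<lambda>y. y v* A)" "\<And>x. g (A *v x) = p1 x"
proof -
  let ?T = "range (\<lambda>y. y v* A)"
  have T: "subspace ?T" by (rule subspace_range_vector_matrix_mult)
  then have spanT: "span ?T = ?T" by (simp add: span_eq_iff)
  have "inj_on (\<lambda>x. A *v x) (span ?T)"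
  proof (rule inj_onI)
    fix u u' assume "u \<in> span ?T" "u' \<in> span ?T" "A *v u = A *v u'"
    then have "u - u' \<in> ?T" "A *v (u - u') = 0"
      using T by (auto simp: spanT subspace_diff matrix_vector_mult_diff_distrib)
    then have "(u - u') \<bullet> (u - u') = 0" using kernel_eq_orthogonal_row_space[of A "u - u'"] by blast
    then show "u = u'" by simp
  qed
  then obtain g where "range g \<subseteq> span ?T" "linear g" "\<And>x. x \<in> span ?T \<Longrightarrow> g (A *v x) = x"
    using linear_inj_on_left_inverse[OF matrix_vector_mul_linear] by blast
  moreover have "g (A *v x) = p1 x" for x
    using calculation(3)[of "p1 x"] orthogonal_projection_in[OF p1, of x] matrix_vector_mult_row_space_projection[OF p1, of x]
    by (simp add: spanT)
  ultimately show ?thesis using that by (simp add: spanT)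
qed

lemma penrose_conditions_solvable:
  fixes A :: "real^'d^'m"
  obtains X where "penrose_conditions A X"
proof -
  let ?T1 = "range (\<lambda>y. y v* A)" and ?T2 = "range (\<lambda>x. A *v x)"
  have T1: "subspace ?T1" by (rule subspace_range_vector_matrix_mult)
  have T2: "subspace ?T2" by (rule subspace_range_matrix_vector_mult)
  obtain p1 p2 where p1: "orthogonal_projection_onto ?T1 p1" and p2: "orthogonal_projection_onto ?T2 p2"
    using orthogonal_projection_exists[OF T1] orthogonal_projection_exists[OF T2] by metis
  obtain g where g: "linear g" "range g \<subseteq> ?T1" and gA: "\<And>x. g (A *v x) = p1 x"
    using row_space_left_inverse[OF p1] by blast
  \<comment> \<open>X sends b to the row-space preimage of the projection of b onto the column space.\<close>
  define X where "X = matrix (g \<circ> p2)"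
  have X: "X *v b = g (p2 b)" for b
    unfolding X_def using matrix_vector_mul(2)[OF linear_compose[OF orthogonal_projection_linear[OF p2 T2] g(1)]]
    by (metis comp_apply)
  have XA: "(X ** A) *v x = p1 x" for x
    using orthogonal_projection_fixes[OF p2 T2, of "A *v x"] by (simp add: X gA flip: matrix_vector_mul_assoc)
  have AX: "(A ** X) *v b = p2 b" for b
  proof -
    obtain x where "p2 b = A *v x" using orthogonal_projection_in[OF p2, of b] by blast
    then show ?thesis
      by (simp add: X gA matrix_vector_mult_row_space_projection[OF p1] flip: matrix_vector_mul_assoc)
  qed
  have "A ** X ** A = A"
    unfolding matrix_eq using XA
    by (simp add: matrix_vector_mult_row_space_projection[OF p1] flip: matrix_vector_mul_assoc)
  moreover have "X ** A ** X = X"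
  proof -
    have "(X ** A) *v (X *v b) = X *v b" for b
      using orthogonal_projection_fixes[OF p1 T1] g(2) by (auto simp: XA X)
    then show ?thesis unfolding matrix_eq by (simp add: matrix_vector_mul_assoc)
  qed
  moreover have "transpose (A ** X) = A ** X" "transpose (X ** A) = X ** A"
    by (rule transpose_eq_if_self_adjoint,
        simp add: AX XA orthogonal_projection_self_adjoint[OF p2] orthogonal_projection_self_adjoint[OF p1])+
  ultimately show ?thesis using that unfolding penrose_conditions_def by blast
qed

lemma penrose_conditions_unique:
  assumes X: "penrose_conditions A X" and Y: "penrose_conditions A Y"
  shows "X = Y"
proof -
  note x = X[unfolded penrose_conditions_def] and y = Y[unfolded penrose_conditions_def]
  have tA1: "transpose A = transpose A ** (A ** Y)"
    by (metis y matrix_transpose_mul matrix_mul_assoc)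
  have tA2: "transpose A = (X ** A) ** transpose A"
    by (metis x matrix_transpose_mul matrix_mul_assoc)
  have "X = X ** transpose X ** transpose A"
    using x by (metis matrix_transpose_mul matrix_mul_assoc)
  also have "\<dots> = X ** transpose X ** transpose A ** (A ** Y)"
    using tA1 by (metis matrix_mul_assoc)
  also have "\<dots> = X ** transpose (A ** X) ** (A ** Y)"
    by (simp add: matrix_transpose_mul matrix_mul_assoc)
  also have "\<dots> = X ** A ** Y" using x by (simp add: matrix_mul_assoc)
  finally have eX: "X = X ** A ** Y" .
  have "Y = transpose A ** transpose Y ** Y"
    using y by (metis matrix_transpose_mul)
  also have "\<dots> = (X ** A) ** transpose (Y ** A) ** Y"
    using tA2 by (simp add: matrix_transpose_mul matrix_mul_assoc)
  also have "\<dots> = X ** A ** Y" using y by (metis matrix_mul_assoc)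
  finally show ?thesis using eX by simp
qed

lemma pseudo_inverse_penrose_conditions: "penrose_conditions A (pseudo_inverse A)"
proof -
  have "\<exists>!X. penrose_conditions A X"
    using penrose_conditions_solvable penrose_conditions_unique by metis
  then show ?thesis unfolding pseudo_inverse_def penrose_conditions_def[symmetric] by (rule theI')
qed

lemma sqnorm_P_minus_commute: "sqnorm_P P (x - y) = sqnorm_P P (y - x)"
proof -
  have "P *v (y - x) = - (P *v (x - y))" by (simp add: matrix_vector_mult_diff_distrib)
  then show ?thesis unfolding sqnorm_P_def by (simp add: inner_diff_left inner_diff_right)
qed

locale orthogonal_projector =
  fixes P :: "real^'d^'d"
  assumes symmetric: "transpose P = P" and idempotent: "P ** P = P"
begin

lemma self_adjoint: "u \<bullet> (P *v w) = (P *v u) \<bullet> w"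
  by (metis dot_lmul_matrix symmetric vector_transpose_matrix)

lemma apply_idempotent: "P *v (P *v u) = P *v u"
  by (simp add: matrix_vector_mul_assoc idempotent)

lemma sqnorm_P_eq_inner: "sqnorm_P P u = (P *v u) \<bullet> (P *v u)"
  unfolding sqnorm_P_def by (metis self_adjoint apply_idempotent)

lemma sqnorm_P_nonneg: "sqnorm_P P u \<ge> 0"
  by (simp add: sqnorm_P_eq_inner)

lemma sqnorm_P_le_norm: "sqnorm_P P u \<le> (norm u)^2"
proof -
  have "(P *v u) \<bullet> u = (P *v u) \<bullet> (P *v u)"
    by (metis self_adjoint apply_idempotent inner_commute)
  moreover have "0 \<le> (u - P *v u) \<bullet> (u - P *v u)" by simp
  ultimately show ?thesis
    by (simp add: sqnorm_P_eq_inner power2_norm_eq_inner inner_diff_left inner_diff_right inner_commute)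
qed

lemma diag_eq_sqnorm_P_axis: "P $ i $ i = sqnorm_P P (axis i 1)"
  unfolding sqnorm_P_def by (simp add: inner_axis' matrix_vector_mult_basis column_def)

lemma diag_nonneg: "P $ i $ i \<ge> 0"
  by (simp add: diag_eq_sqnorm_P_axis sqnorm_P_nonneg)

lemma apply_axis_if_diag_eq_1:
  assumes "P $ i $ i = 1"
  shows "P *v axis i 1 = axis i 1"
proof -
  have "(P *v axis i 1) \<bullet> (P *v axis i 1) = 1"
    using assms by (simp add: diag_eq_sqnorm_P_axis sqnorm_P_eq_inner)
  moreover have "axis i 1 \<bullet> (P *v axis i (1::real)) = 1"
    using assms diag_eq_sqnorm_P_axis unfolding sqnorm_P_def by simp
  ultimately have "(axis i 1 - P *v axis i 1) \<bullet> (axis i 1 - P *v axis i (1::real)) = 0"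
    by (simp add: inner_diff_left inner_diff_right inner_commute inner_axis_axis)
  then show ?thesis by simp
qed

lemma component_if_diag_eq_1:
  assumes "P $ i $ i = 1"
  shows "(P *v z) $ i = z $ i"
  using self_adjoint[of z "axis i 1"] apply_axis_if_diag_eq_1[OF assms]
  by (simp add: inner_axis)

lemma sqnorm_P_add_axis:
  "sqnorm_P P (w + d *\<^sub>R axis i 1) = sqnorm_P P w + 2 * d * (P *v w) $ i + d^2 * P $ i $ i"
proof -
  have "w \<bullet> (P *v axis i 1) = (P *v w) $ i"
    using self_adjoint[of w "axis i 1"] by (simp add: inner_axis)
  moreover have "axis i 1 \<bullet> (P *v w) = (P *v w) $ i" by (simp add: inner_axis')
  ultimately show ?thesis
    unfolding sqnorm_P_def diag_eq_sqnorm_P_axis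
    by (simp add: matrix_vector_right_distrib matrix_vector_mult_scaleR inner_add_left inner_add_right
        power2_eq_square algebra_simps)
qed

lemma sqnorm_P_convex:
  assumes "0 \<le> b" "b \<le> 1"
  shows "sqnorm_P P ((1 - b) *\<^sub>R u + b *\<^sub>R v) \<le> (1 - b) * sqnorm_P P u + b * sqnorm_P P v"
proof -
  let ?U = "P *v u" and ?V = "P *v v"
  have "P *v ((1 - b) *\<^sub>R u + b *\<^sub>R v) = (1 - b) *\<^sub>R ?U + b *\<^sub>R ?V"
    by (simp add: matrix_vector_right_distrib matrix_vector_mult_scaleR)
  then have "(1 - b) * sqnorm_P P u + b * sqnorm_P P v - sqnorm_P P ((1 - b) *\<^sub>R u + b *\<^sub>R v)
     = b * (1 - b) * ((?U - ?V) \<bullet> (?U - ?V))"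
    by (simp add: sqnorm_P_eq_inner inner_add_left inner_add_right inner_diff_left inner_diff_right
        inner_commute algebra_simps)
  moreover have "b * (1 - b) * ((?U - ?V) \<bullet> (?U - ?V)) \<ge> 0" using assms by simp
  ultimately show ?thesis by linarith
qed

end

lemma orthogonal_projector_pseudo_inverse_mult: "orthogonal_projector (pseudo_inverse A ** A)"
  using pseudo_inverse_penrose_conditions[of A]
  by unfold_locales (simp_all add: penrose_conditions_def matrix_mul_assoc)

section \<open>Coordinatewise smoothness\<close>

lemma has_real_derivative_along_axis:
  fixes f :: "real^'d \<Rightarrow> real"
  assumes grad: "\<And>x. (f has_derivative (\<lambda>h. grad x \<bullet> h)) (at x)"
  shows "((\<lambda>s. f (y + s *\<^sub>R axis i 1)) has_real_derivative (grad (y + s *\<^sub>R axis i 1) $ i)) (at s)"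
proof -
  have "((\<lambda>s. y + s *\<^sub>R axis i 1) has_derivative (\<lambda>s. s *\<^sub>R axis i 1)) (at s)"
    by (auto intro!: derivative_eq_intros)
  from has_derivative_compose[OF this grad]
  have "((\<lambda>s. f (y + s *\<^sub>R axis i 1)) has_derivative (\<lambda>h. grad (y + s *\<^sub>R axis i 1) \<bullet> (h *\<^sub>R axis i 1))) (at s)" .
  moreover have "(\<lambda>h. grad (y + s *\<^sub>R axis i 1) \<bullet> (h *\<^sub>R axis i 1)) = (*) (grad (y + s *\<^sub>R axis i 1) $ i)"
    by (auto simp: inner_axis)
  ultimately show ?thesis by (simp add: has_field_derivative_def)
qed

lemma coordinate_descent_inequality:
  fixes f :: "real^'d \<Rightarrow> real"
  assumes grad: "\<And>x. (f has_derivative (\<lambda>h. grad x \<bullet> h)) (at x)"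
    and smooth: "\<And>x h. \<bar>grad (x + h *\<^sub>R axis i 1) $ i - grad x $ i\<bar> \<le> M * \<bar>h\<bar>"
  shows "f (y + h *\<^sub>R axis i 1) \<le> f y + h * grad y $ i + M / 2 * h^2"
proof -
  define k where "k s = f (y + s *\<^sub>R axis i 1) - s * grad y $ i - M / 2 * s^2" for s
  have k': "(k has_real_derivative (grad (y + s *\<^sub>R axis i 1) $ i - grad y $ i - M * s)) (at s)" for s
    unfolding k_def by (auto intro!: derivative_eq_intros has_real_derivative_along_axis[OF grad])
  have bound: "\<bar>grad (y + s *\<^sub>R axis i 1) $ i - grad y $ i\<bar> \<le> M * \<bar>s\<bar>" for s
    using smooth[of y s] .
  have "k h \<le> k 0"
  proof (cases "h \<ge> 0")
    case True
    show ?thesis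
    proof (rule DERIV_nonpos_imp_nonincreasing[OF True])
      fix s assume "0 \<le> s" "s \<le> h"
      then show "\<exists>D. DERIV k s :> D \<and> D \<le> 0"
        using k'[of s] bound[of s] by (intro exI[of _ "grad (y + s *\<^sub>R axis i 1) $ i - grad y $ i - M * s"]) auto
    qed
  next
    case False
    show ?thesis
    proof (rule DERIV_nonneg_imp_nondecreasing[of h 0 k])
      show "h \<le> 0" using False by simp
      fix s assume "h \<le> s" "s \<le> 0"
      then show "\<exists>D. DERIV k s :> D \<and> D \<ge> 0"
        using k'[of s] bound[of s] by (intro exI[of _ "grad (y + s *\<^sub>R axis i 1) $ i - grad y $ i - M * s"]) auto
    qed
  qed
  then show ?thesis by (simp add: k_def)
qed

section \<open>Extended-real convex functions and the proximal map\<close>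

lemma convex_ext_not_MInfty: "convex_ext \<phi> \<Longrightarrow> \<phi> x \<noteq> -\<infinity>"
  unfolding convex_ext_def by blast

definition ereal_epigraph :: "(real \<Rightarrow> ereal) \<Rightarrow> (real \<times> real) set" where
  "ereal_epigraph \<phi> = {(s, S). \<phi> s \<le> ereal S}"

lemma convex_ereal_epigraph:
  assumes "convex_ext \<phi>"
  shows "convex (ereal_epigraph \<phi>)"
proof (rule convexI)
  fix a b :: "real \<times> real" and c d :: real
  assume a: "a \<in> ereal_epigraph \<phi>" and b: "b \<in> ereal_epigraph \<phi>" and c: "0 \<le> c" "0 \<le> d" "c + d = 1"
  have "\<phi> (c * fst a + (1 - c) * fst b) \<le> ereal c * \<phi> (fst a) + ereal (1 - c) * \<phi> (fst b)"
    using assms c unfolding convex_ext_def by auto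
  moreover have "1 - c = d" using c by simp
  ultimately have "\<phi> (c * fst a + d * fst b) \<le> ereal c * \<phi> (fst a) + ereal d * \<phi> (fst b)"
    by simp
  also have "\<dots> \<le> ereal c * ereal (snd a) + ereal d * ereal (snd b)"
    using a b c by (intro add_mono ereal_mult_left_mono) (auto simp: ereal_epigraph_def)
  finally show "c *\<^sub>R a + d *\<^sub>R b \<in> ereal_epigraph \<phi>"
    by (simp add: ereal_epigraph_def case_prod_unfold)
qed

lemma le_zero_if_le_small_multiples:
  fixes D c :: real
  assumes "c \<ge> 0" "\<And>s. 0 < s \<Longrightarrow> s \<le> 1 \<Longrightarrow> D \<le> s * c"
  shows "D \<le> 0"
proof (rule ccontr)
  assume "\<not> D \<le> 0"
  then have "0 < D / (D + c)" "D / (D + c) \<le> 1" "D / (D + c) * c < D"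
    using assms(1) by (auto simp: field_simps)
  with assms(2) show False by fastforce
qed

lemma is_prox_finite:
  assumes "is_prox \<eta> \<psi> z v" and "\<psi> u \<noteq> \<infinity>"
  shows "\<psi> v \<noteq> \<infinity>"
  using assms unfolding is_prox_def by (cases "\<psi> u") (auto dest: spec[of _ u])

lemma is_prox_prox:
  assumes "\<exists>v. is_prox \<eta> \<psi> z v"
  shows "is_prox \<eta> \<psi> z (prox \<eta> \<psi> z)"
  unfolding prox_def using assms by (rule someI_ex)

lemma prox_zero:
  assumes "\<eta> > 0"
  shows "prox \<eta> (\<lambda>_. 0) z = z"
proof -
  have "is_prox \<eta> (\<lambda>_. 0) z z" unfolding is_prox_def using assms by simp
  then have "is_prox \<eta> (\<lambda>_. 0) z (prox \<eta> (\<lambda>_. 0) z)" by (rule is_prox_prox[OF exI])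
  then have "1 / (2 * \<eta>) * (prox \<eta> (\<lambda>_. 0) z - z)^2 \<le> 0"
    unfolding is_prox_def by (metis add.right_neutral diff_self ereal_less_eq(3) mult_zero_right power_zero_numeral)
  then have "(prox \<eta> (\<lambda>_. 0) z - z)^2 \<le> 0" using assms by (simp add: divide_le_0_iff)
  then show ?thesis by simp
qed

lemma prox_subgradient_inequality:
  assumes conv: "convex_ext \<psi>" and prox: "is_prox \<eta> \<psi> z v" and \<eta>: "\<eta> > 0" and fin: "\<psi> u \<noteq> \<infinity>"
  shows "real_of_ereal (\<psi> v) + (z - v) * (u - v) / \<eta> \<le> real_of_ereal (\<psi> u)"
proof -
  define Pu Pv where "Pu = real_of_ereal (\<psi> u)" and "Pv = real_of_ereal (\<psi> v)"
  have \<psi>u: "\<psi> u = ereal Pu"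
    unfolding Pu_def using fin convex_ext_not_MInfty[OF conv, of u] by (cases "\<psi> u") auto
  have \<psi>v: "\<psi> v = ereal Pv"
    unfolding Pv_def using is_prox_finite[OF prox fin] convex_ext_not_MInfty[OF conv, of v]
    by (cases "\<psi> v") auto
  \<comment> \<open>Compare v with the points of the segment from v towards u and let them tend to v.\<close>
  define C where "C = (u - v)^2 / (2 * \<eta>)"
  define G where "G = (z - v) * (u - v) / \<eta>"
  have "Pv - Pu + G \<le> s * C" if s: "0 < s" "s \<le> 1" for s
  proof -
    define q where "q = s * u + (1 - s) * v"
    have "\<psi> q \<le> ereal s * \<psi> u + ereal (1 - s) * \<psi> v"
      using conv s unfolding convex_ext_def q_def by auto
    then obtain Pq where \<psi>q: "\<psi> q = ereal Pq" and Pq: "Pq \<le> s * Pu + (1 - s) * Pv"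
      using convex_ext_not_MInfty[OF conv, of q] by (cases "\<psi> q") (auto simp: \<psi>u \<psi>v)
    have "1 / (2 * \<eta>) * (v - z)^2 + Pv \<le> 1 / (2 * \<eta>) * (q - z)^2 + Pq"
      using prox \<psi>q \<psi>v unfolding is_prox_def by (metis ereal_less_eq(3) plus_ereal.simps(1))
    then have "Pv - Pq \<le> ((q - z)^2 - (v - z)^2) / (2 * \<eta>)"
      by (simp add: diff_divide_distrib)
    also have "((q - z)^2 - (v - z)^2) / (2 * \<eta>) = s * (s * C - G)"
      unfolding q_def C_def G_def using \<eta> by (simp add: field_simps power2_eq_square)
    finally have "s * (Pv - Pu + G) \<le> s * (s * C)"
      using Pq by (simp add: algebra_simps)
    then show ?thesis using s by simp
  qed
  then have "Pv - Pu + G \<le> 0"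
    using \<eta> by (intro le_zero_if_le_small_multiples[of C]) (auto simp: C_def)
  then show ?thesis unfolding Pu_def Pv_def G_def by simp
qed

section \<open>Points on segments\<close>

lemma convex_segment_point:
  assumes "convex E" "u \<in> E" "v \<in> E" "0 \<le> c" "c \<le> 1"
  shows "u + c *\<^sub>R (v - u) \<in> E"
proof -
  have "(1 - c) *\<^sub>R u + c *\<^sub>R v \<in> E" using assms by (intro convexD) auto
  moreover have "(1 - c) *\<^sub>R u + c *\<^sub>R v = u + c *\<^sub>R (v - u)" by (simp add: algebra_simps)
  ultimately show ?thesis by simp
qed

(* If x = u + mu (v - u) and (1 - alpha beta) w = (1 - beta) v + beta (1 - alpha) x, as for x_t, v_t and
   w_t, then w lies on the same segment with weight mix_weight; the update (1 - alpha) x + alpha w of an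
   unsampled coordinate lies on the segment from u to w with weight unsampled_weight, and
   sampled_weight is the weight of v in the update of the sampled coordinate. *)
definition mix_weight :: "real \<Rightarrow> real \<Rightarrow> real \<Rightarrow> real" where
  "mix_weight \<alpha> \<beta> \<mu> = ((1 - \<beta>) + \<beta> * (1 - \<alpha>) * \<mu>) / (1 - \<alpha> * \<beta>)"

lemma mix_weight_bounds:
  assumes \<alpha>: "0 < \<alpha>" "\<alpha> \<le> 1" and \<beta>: "0 \<le> \<beta>" "\<beta> < 1" and \<mu>: "0 \<le> \<mu>" "\<mu> \<le> 1"
  shows "0 < mix_weight \<alpha> \<beta> \<mu>" "\<mu> \<le> mix_weight \<alpha> \<beta> \<mu>" "mix_weight \<alpha> \<beta> \<mu> \<le> 1"
proof -
  have "\<alpha> * \<beta> \<le> 1 * \<beta>" using \<alpha> \<beta> by (intro mult_right_mono) auto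
  then have q: "\<alpha> * \<beta> < 1" using \<beta> by simp
  have num: "1 - \<beta> + \<beta> * (1 - \<alpha>) * \<mu> - \<mu> * (1 - \<alpha> * \<beta>) = (1 - \<beta>) * (1 - \<mu>)"
    "1 - \<alpha> * \<beta> - (1 - \<beta> + \<beta> * (1 - \<alpha>) * \<mu>) = \<beta> * (1 - \<alpha>) * (1 - \<mu>)"
    by (simp_all add: algebra_simps)
  have nonneg: "0 \<le> \<beta> * (1 - \<alpha>) * \<mu>" "0 \<le> \<beta> * (1 - \<alpha>) * (1 - \<mu>)" "0 \<le> (1 - \<beta>) * (1 - \<mu>)"
    using \<alpha> \<beta> \<mu> by simp_all
  have "0 < 1 - \<beta> + \<beta> * (1 - \<alpha>) * \<mu>" using nonneg(1) \<beta> by linarith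
  moreover have "\<mu> * (1 - \<alpha> * \<beta>) \<le> 1 - \<beta> + \<beta> * (1 - \<alpha>) * \<mu>" using num(1) nonneg(3) by linarith
  moreover have "1 - \<beta> + \<beta> * (1 - \<alpha>) * \<mu> \<le> 1 - \<alpha> * \<beta>" using num(2) nonneg(2) by linarith
  ultimately show "0 < mix_weight \<alpha> \<beta> \<mu>" "\<mu> \<le> mix_weight \<alpha> \<beta> \<mu>" "mix_weight \<alpha> \<beta> \<mu> \<le> 1"
    using q unfolding mix_weight_def by (simp_all add: le_divide_eq divide_le_eq)
qed

lemma mix_on_segment:
  fixes u v w :: "'a::real_vector"
  assumes q: "\<alpha> * \<beta> \<noteq> 1"
    and w: "(1 - \<alpha> * \<beta>) *\<^sub>R w = (1 - \<beta>) *\<^sub>R v + (\<beta> * (1 - \<alpha>)) *\<^sub>R (u + \<mu> *\<^sub>R (v - u))"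
  shows "w = u + mix_weight \<alpha> \<beta> \<mu> *\<^sub>R (v - u)"
proof -
  let ?c = "mix_weight \<alpha> \<beta> \<mu>"
  have "(1 - \<alpha> * \<beta>) * ?c = (1 - \<beta>) + \<beta> * (1 - \<alpha>) * \<mu>"
    "(1 - \<alpha> * \<beta>) * (1 - ?c) = \<beta> * (1 - \<alpha>) * (1 - \<mu>)"
    using q unfolding mix_weight_def by (simp_all add: field_simps)
  moreover have "(1 - \<alpha> * \<beta>) *\<^sub>R (u + ?c *\<^sub>R (v - u))
      = ((1 - \<alpha> * \<beta>) * ?c) *\<^sub>R v + ((1 - \<alpha> * \<beta>) * (1 - ?c)) *\<^sub>R u"
    by (simp add: algebra_simps)
  moreover have "(1 - \<beta>) *\<^sub>R v + (\<beta> * (1 - \<alpha>)) *\<^sub>R (u + \<mu> *\<^sub>R (v - u))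
      = ((1 - \<beta>) + \<beta> * (1 - \<alpha>) * \<mu>) *\<^sub>R v + (\<beta> * (1 - \<alpha>) * (1 - \<mu>)) *\<^sub>R u"
    by (simp add: algebra_simps)
  ultimately have "(1 - \<alpha> * \<beta>) *\<^sub>R w = (1 - \<alpha> * \<beta>) *\<^sub>R (u + ?c *\<^sub>R (v - u))"
    unfolding w by simp
  then show ?thesis using q by simp
qed

lemma convex_scaled_combination:
  fixes E :: "'a::real_vector set"
  assumes E: "convex E" "v \<in> E" "u \<in> E" and ab: "0 \<le> a" "0 \<le> b"
  obtains u' where "u' \<in> E" "a *\<^sub>R v + b *\<^sub>R u = (a + b) *\<^sub>R u'"
proof (cases "a + b = 0")
  case True
  then have "a = 0" "b = 0" using ab by auto
  then show ?thesis using that[of v] E by simp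
next
  case False
  then have "(a / (a + b)) *\<^sub>R v + (b / (a + b)) *\<^sub>R u \<in> E"
    using E ab by (intro convexD) (auto simp: add_divide_distrib[symmetric])
  moreover have "a *\<^sub>R v + b *\<^sub>R u = (a + b) *\<^sub>R ((a / (a + b)) *\<^sub>R v + (b / (a + b)) *\<^sub>R u)"
    using False by (simp add: scaleR_add_right)
  ultimately show ?thesis using that by blast
qed

definition sampled_weight :: "real \<Rightarrow> real \<Rightarrow> real \<Rightarrow> real \<Rightarrow> real" where
  "sampled_weight p \<alpha> \<beta> \<mu> = (1 - \<alpha>) * \<mu> + \<alpha> * (1 - 1 / p) * mix_weight \<alpha> \<beta> \<mu>"

definition unsampled_weight :: "real \<Rightarrow> real \<Rightarrow> real \<Rightarrow> real" where
  "unsampled_weight \<alpha> \<beta> \<mu> = \<alpha> + (1 - \<alpha>) * \<mu> / mix_weight \<alpha> \<beta> \<mu>"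

lemma sampled_weight_scaled:
  assumes "p > 0" "\<alpha> * \<beta> \<noteq> 1"
  shows "p * (1 - \<alpha> * \<beta>) * sampled_weight p \<alpha> \<beta> \<mu>
      = (1 - \<alpha>) * \<mu> * (p - \<alpha> * \<beta>) - \<alpha> * (1 - p) * (1 - \<beta>)"
    and "p * (1 - \<alpha> * \<beta>) * (1 - \<alpha> / p - sampled_weight p \<alpha> \<beta> \<mu>)
      = (1 - \<alpha>) * (1 - \<mu>) * (p - \<alpha> * \<beta>)"
  using assms unfolding sampled_weight_def mix_weight_def by (simp_all add: field_simps)

lemma unsampled_weight_bounds:
  assumes \<alpha>: "0 < \<alpha>" "\<alpha> \<le> 1" and \<beta>: "0 \<le> \<beta>" "\<beta> < 1" and \<mu>: "0 \<le> \<mu>" "\<mu> \<le> 1"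
    and p: "p > 0" and sw: "sampled_weight p \<alpha> \<beta> \<mu> \<ge> 0"
  shows "\<alpha> / p \<le> unsampled_weight \<alpha> \<beta> \<mu>" "unsampled_weight \<alpha> \<beta> \<mu> \<le> 1"
proof -
  note c = mix_weight_bounds[OF \<alpha> \<beta> \<mu>]
  have "unsampled_weight \<alpha> \<beta> \<mu> - \<alpha> / p = sampled_weight p \<alpha> \<beta> \<mu> / mix_weight \<alpha> \<beta> \<mu>"
    using c(1) p unfolding unsampled_weight_def sampled_weight_def by (simp add: field_simps)
  then show "\<alpha> / p \<le> unsampled_weight \<alpha> \<beta> \<mu>" using divide_nonneg_pos[OF sw c(1)] by linarith
  have "(1 - \<alpha>) * \<mu> \<le> (1 - \<alpha>) * mix_weight \<alpha> \<beta> \<mu>" using c(2) \<alpha> by (simp add: mult_left_mono)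
  then have "(1 - \<alpha>) * \<mu> / mix_weight \<alpha> \<beta> \<mu> \<le> 1 - \<alpha>"
    using c(1) by (simp add: pos_divide_le_eq mult.commute)
  then show "unsampled_weight \<alpha> \<beta> \<mu> \<le> 1" unfolding unsampled_weight_def by linarith
qed

lemma unsampled_on_segment:
  fixes u v :: "'a::real_vector"
  assumes c: "mix_weight \<alpha> \<beta> \<mu> \<noteq> 0"
  shows "(1 - \<alpha>) *\<^sub>R (u + \<mu> *\<^sub>R (v - u)) + \<alpha> *\<^sub>R (u + mix_weight \<alpha> \<beta> \<mu> *\<^sub>R (v - u))
    = u + unsampled_weight \<alpha> \<beta> \<mu> *\<^sub>R ((u + mix_weight \<alpha> \<beta> \<mu> *\<^sub>R (v - u)) - u)"
proof -
  let ?c = "mix_weight \<alpha> \<beta> \<mu>"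
  have "unsampled_weight \<alpha> \<beta> \<mu> * ?c = (1 - \<alpha>) * \<mu> + \<alpha> * ?c"
    using c unfolding unsampled_weight_def by (simp add: field_simps)
  moreover have "(1 - \<alpha>) *\<^sub>R (u + \<mu> *\<^sub>R (v - u)) + \<alpha> *\<^sub>R (u + ?c *\<^sub>R (v - u))
      = u + ((1 - \<alpha>) * \<mu> + \<alpha> * ?c) *\<^sub>R (v - u)"
    by (simp add: algebra_simps)
  ultimately show ?thesis by simp
qed

lemma sampled_on_segment:
  fixes u v t :: "'a::real_vector"
  assumes E: "convex E" "v \<in> E" "u \<in> E"
    and sw: "0 \<le> sampled_weight p \<alpha> \<beta> \<mu>" "0 \<le> 1 - \<alpha> / p - sampled_weight p \<alpha> \<beta> \<mu>"
  obtains u' where "u' \<in> E"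
    "(1 - \<alpha>) *\<^sub>R (u + \<mu> *\<^sub>R (v - u)) + (\<alpha> * (1 - 1 / p)) *\<^sub>R (u + mix_weight \<alpha> \<beta> \<mu> *\<^sub>R (v - u))
       + (\<alpha> / p) *\<^sub>R t = u' + (\<alpha> / p) *\<^sub>R (t - u')"
proof -
  let ?a = "sampled_weight p \<alpha> \<beta> \<mu>"
  let ?b = "1 - \<alpha> / p - sampled_weight p \<alpha> \<beta> \<mu>"
  obtain u' where u': "u' \<in> E" "?a *\<^sub>R v + ?b *\<^sub>R u = (?a + ?b) *\<^sub>R u'"
    using convex_scaled_combination[OF E sw] by blast
  have "(1 - \<alpha>) *\<^sub>R (u + \<mu> *\<^sub>R (v - u)) + (\<alpha> * (1 - 1 / p)) *\<^sub>R (u + mix_weight \<alpha> \<beta> \<mu> *\<^sub>R (v - u))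
      = ((1 - \<alpha>) + \<alpha> * (1 - 1 / p)) *\<^sub>R u + ?a *\<^sub>R (v - u)"
    unfolding sampled_weight_def by (simp add: algebra_simps)
  also have "\<dots> = ?a *\<^sub>R v + ?b *\<^sub>R u" by (simp add: algebra_simps)
  also have "\<dots> = (1 - \<alpha> / p) *\<^sub>R u'" using u'(2) by simp
  finally show ?thesis using that[OF u'(1)] by (simp add: algebra_simps)
qed

section \<open>Step sizes\<close>

lemma affine_nonneg_between:
  fixes lo hi x c0 c1 :: real
  assumes "lo < hi" "lo \<le> x" "x \<le> hi" "c0 * lo + c1 \<ge> 0" "c0 * hi + c1 \<ge> 0"
  shows "c0 * x + c1 \<ge> 0"
proof -
  have "(hi - lo) * (c0 * x + c1) = (hi - x) * (c0 * lo + c1) + (x - lo) * (c0 * hi + c1)"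
    by (simp add: algebra_simps)
  also have "\<dots> \<ge> 0" using assms by simp
  finally show ?thesis using assms(1) by (simp add: zero_le_mult_iff)
qed

lemma weight_affine_bound:
  fixes \<alpha> p q :: real
  assumes p: "0 < p" "p < 1" and q: "0 \<le> q" "q \<le> p^2" and \<alpha>: "q \<le> \<alpha>" "\<alpha> \<le> p"
  shows "(1 - p)^2 * p^2 * (\<alpha> - q) \<le> ((1 - p) * \<alpha> + p * q) * (p - q)^2"
proof -
  define c0 where "c0 = (1 - p) * (p - q)^2 - (1 - p)^2 * p^2"
  define c1 where "c1 = p * q * (p - q)^2 + (1 - p)^2 * p^2 * q"
  have "p^2 < p" using p by (simp add: power2_eq_square)
  then have qp: "q < p" using q by linarith
  have "c0 * q + c1 = q * (p - q)^2" unfolding c0_def c1_def by (simp add: algebra_simps power2_eq_square)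
  then have lo: "c0 * q + c1 \<ge> 0" using q by simp
  have "p * (1 - p) \<le> p - q" using q by (simp add: algebra_simps power2_eq_square)
  then have "(1 - p) * (p * (1 - p)) \<le> (1 - p + q) * (p - q)"
    using p q by (intro mult_mono) auto
  moreover have "(1 - p)^2 * p = (1 - p) * (p * (1 - p))" by (simp add: power2_eq_square)
  ultimately have "0 \<le> (1 - p + q) * (p - q) - (1 - p)^2 * p" by linarith
  then have "0 \<le> p * (p - q) * ((1 - p + q) * (p - q) - (1 - p)^2 * p)"
    using p qp by simp
  also have "p * (p - q) * ((1 - p + q) * (p - q) - (1 - p)^2 * p) = c0 * p + c1"
    unfolding c0_def c1_def by (simp add: algebra_simps power2_eq_square)
  finally have hi: "c0 * p + c1 \<ge> 0" .
  have "((1 - p) * \<alpha> + p * q) * (p - q)^2 - (1 - p)^2 * p^2 * (\<alpha> - q) = c0 * \<alpha> + c1"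
    unfolding c0_def c1_def by (simp add: algebra_simps power2_eq_square)
  with affine_nonneg_between[OF qp \<alpha> lo hi] show ?thesis by simp
qed

lemma consecutive_alpha_bound:
  fixes \<alpha> \<gamma> p q :: real
  assumes \<alpha>: "0 < \<alpha>" "\<alpha> < 1" and \<gamma>: "0 < \<gamma>" and p: "0 < p" "p \<le> 1"
    and q: "0 \<le> q" "q \<le> p^2"
    and rec: "\<gamma>^2 * (1 - \<alpha>) = \<alpha> * (\<alpha> - q)" and step: "\<alpha>^2 \<le> p * \<alpha> - p * q"
  shows "(1 - p) * p * \<gamma> \<le> \<alpha> * (p - q)"
proof (cases "p = 1")
  case True
  then show ?thesis using q \<alpha> by simp
next
  case False
  have "0 \<le> \<gamma>^2 * (1 - \<alpha>)" using \<alpha> by simp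
  then have "0 \<le> \<alpha> * (\<alpha> - q)" using rec by simp
  then have "q \<le> \<alpha>" using \<alpha> by (simp add: zero_le_mult_iff)
  moreover have "\<alpha> \<le> p"
  proof -
    have "0 \<le> p * q" using p q by simp
    then have "\<alpha> * \<alpha> \<le> p * \<alpha>" using step unfolding power2_eq_square by linarith
    then show ?thesis using \<alpha> by simp
  qed
  ultimately have "(1 - p)^2 * p^2 * (\<alpha> - q) \<le> ((1 - p) * \<alpha> + p * q) * (p - q)^2"
    using weight_affine_bound False p q by simp
  also have "\<dots> \<le> \<alpha> * (1 - \<alpha>) * (p - q)^2"
  proof (rule mult_right_mono)
    show "(1 - p) * \<alpha> + p * q \<le> \<alpha> * (1 - \<alpha>)" using step by (simp add: algebra_simps power2_eq_square)
  qed simp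
  finally have bound: "\<alpha> * ((1 - p)^2 * p^2 * (\<alpha> - q)) \<le> \<alpha> * (\<alpha> * (1 - \<alpha>) * (p - q)^2)"
    using \<alpha> by simp
  have "((1 - p) * p * \<gamma>)^2 * (1 - \<alpha>) = ((1 - p) * p)^2 * (\<gamma>^2 * (1 - \<alpha>))" by algebra
  also have "\<dots> = \<alpha> * ((1 - p)^2 * p^2 * (\<alpha> - q))" unfolding rec by algebra
  also have "\<dots> \<le> \<alpha> * (\<alpha> * (1 - \<alpha>) * (p - q)^2)" by (rule bound)
  also have "\<dots> = (\<alpha> * (p - q))^2 * (1 - \<alpha>)" by algebra
  finally have "((1 - p) * p * \<gamma>)^2 * (1 - \<alpha>) \<le> (\<alpha> * (p - q))^2 * (1 - \<alpha>)" .
  then have squares: "((1 - p) * p * \<gamma>)^2 \<le> (\<alpha> * (p - q))^2" using \<alpha> by simp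
  have "q \<le> p" using q mult_left_mono[of p 1 p] p unfolding power2_eq_square by linarith
  then have "0 \<le> \<alpha> * (p - q)" using \<alpha> by simp
  with squares show ?thesis by (rule power2_le_imp_le)
qed

lemma initial_weight_condition:
  fixes \<alpha> \<beta> p :: real
  assumes "\<alpha> \<le> p" "0 \<le> \<alpha> * \<beta>" "\<alpha> * \<beta> \<le> 1"
  shows "\<alpha> * (1 - p) * (1 - \<beta>) \<le> (1 - \<alpha>) * (p - \<alpha> * \<beta>)"
proof -
  have "(1 - \<alpha>) * (p - \<alpha> * \<beta>) - \<alpha> * (1 - p) * (1 - \<beta>) = (p - \<alpha>) * (1 - \<alpha> * \<beta>)"
    by algebra
  also have "\<dots> \<ge> 0" using assms by simp
  finally show ?thesis by simp
qed

lemma later_weight_condition: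
  fixes \<alpha> \<beta> \<gamma> p :: real
  assumes bound: "(1 - p) * p * \<gamma> \<le> \<alpha> * (p - \<alpha> * \<beta>)"
    and rec: "\<gamma>^2 * (1 - \<alpha>) = \<alpha> * (\<alpha> - \<alpha> * \<beta>)"
    and pos: "0 < \<gamma>" "0 < p" "0 < \<alpha>" and \<beta>: "\<beta> \<le> 1"
  shows "\<alpha> * (1 - p) * (1 - \<beta>) \<le> (1 - \<alpha>) * (\<gamma> / p) * (p - \<alpha> * \<beta>)"
proof -
  have "0 \<le> \<alpha> * (1 - \<beta>)" using pos \<beta> by simp
  have "(\<alpha> * (1 - p) * (1 - \<beta>)) * (p * \<gamma>) = \<alpha> * (1 - \<beta>) * ((1 - p) * p * \<gamma>)" by algebra
  also have "\<dots> \<le> \<alpha> * (1 - \<beta>) * (\<alpha> * (p - \<alpha> * \<beta>))"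
    by (rule mult_left_mono[OF bound]) fact
  also have "\<dots> = (\<gamma>^2 * (1 - \<alpha>)) * (p - \<alpha> * \<beta>)" unfolding rec by algebra
  also have "\<dots> = ((1 - \<alpha>) * (\<gamma> / p) * (p - \<alpha> * \<beta>)) * (p * \<gamma>)"
    using pos by (simp add: field_simps power2_eq_square)
  finally have "(\<alpha> * (1 - p) * (1 - \<beta>)) * (p * \<gamma>) \<le> ((1 - \<alpha>) * (\<gamma> / p) * (p - \<alpha> * \<beta>)) * (p * \<gamma>)" .
  then show ?thesis by (rule mult_right_le_imp_le) (use pos in simp)
qed

locale apcg_step_sizes =
  fixes \<sigma> S :: real and a As Bs :: "nat \<Rightarrow> real"
  assumes sigma_nonneg: "\<sigma> \<ge> 0" and S_pos: "S > 0"
    and As_0: "As 0 \<ge> 0" and Bs_0: "Bs 0 > 0"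
    and a_pos: "\<And>t. a (Suc t) > 0"
    and a_eq: "\<And>t. (a (Suc t))^2 * S^2 = As (Suc t) * Bs (Suc t)"
    and As_Suc: "\<And>t. As (Suc t) = As t + a (Suc t)"
    and Bs_Suc: "\<And>t. Bs (Suc t) = Bs t + \<sigma> * a (Suc t)"
begin

definition \<alpha> :: "nat \<Rightarrow> real" where "\<alpha> t = a (Suc t) / As (Suc t)"
definition \<beta> :: "nat \<Rightarrow> real" where "\<beta> t = \<sigma> * a (Suc t) / Bs (Suc t)"

lemma As_nonneg_Bs_pos: "As t \<ge> 0 \<and> Bs t > 0"
  using As_0 Bs_0
  by (induction t) (simp_all add: As_Suc Bs_Suc add_nonneg_nonneg add_pos_nonneg a_pos sigma_nonneg less_imp_le)

lemma As_nonneg: "As t \<ge> 0" and Bs_pos: "Bs t > 0"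
  using As_nonneg_Bs_pos by auto

lemma As_Suc_pos: "As (Suc t) > 0"
  using As_Suc[of t] As_nonneg[of t] a_pos[of t] by simp

lemma \<alpha>_pos: "\<alpha> t > 0"
  unfolding \<alpha>_def using a_pos As_Suc_pos by simp

lemma \<alpha>_le_1: "\<alpha> t \<le> 1"
  unfolding \<alpha>_def using As_Suc[of t] As_nonneg[of t] As_Suc_pos[of t] by simp

lemma \<alpha>_less_1: "As t > 0 \<Longrightarrow> \<alpha> t < 1"
  unfolding \<alpha>_def using As_Suc[of t] a_pos[of t] by simp

lemma \<alpha>_eq_1: "\<not> As t > 0 \<Longrightarrow> \<alpha> t = 1"
  unfolding \<alpha>_def using As_Suc[of t] As_nonneg[of t] a_pos[of t] by simp

lemma \<beta>_nonneg: "\<beta> t \<ge> 0"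
  unfolding \<beta>_def using a_pos[of t] Bs_pos[of "Suc t"] sigma_nonneg by simp

lemma \<beta>_less_1: "\<beta> t < 1"
  unfolding \<beta>_def using Bs_Suc[of t] Bs_pos[of t] Bs_pos[of "Suc t"] by simp

lemma \<alpha>_mult_\<beta>: "\<alpha> t * \<beta> t = \<sigma> / S^2"
proof -
  have "\<alpha> t * \<beta> t = \<sigma> * (a (Suc t))^2 / (As (Suc t) * Bs (Suc t))"
    unfolding \<alpha>_def \<beta>_def by (simp add: power2_eq_square)
  also have "\<dots> = \<sigma> / S^2" using a_pos[of t] by (simp flip: a_eq)
  finally show ?thesis .
qed

lemma \<alpha>_mult_\<beta>_less_1: "\<alpha> t * \<beta> t < 1"
  using mult_mono[OF \<alpha>_le_1 order.refl, of "\<beta> t" t] \<beta>_nonneg[of t] \<beta>_less_1[of t] by simp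

lemma As_Suc_mult_\<alpha>: "As (Suc t) * \<alpha> t = a (Suc t)"
  unfolding \<alpha>_def using As_Suc_pos[of t] by simp

lemma As_Suc_mult_one_minus_\<alpha>: "As (Suc t) * (1 - \<alpha> t) = As t"
  using As_Suc_mult_\<alpha>[of t] As_Suc[of t] by (simp add: algebra_simps)

lemma Bs_Suc_mult_\<beta>: "Bs (Suc t) * \<beta> t = \<sigma> * a (Suc t)"
  unfolding \<beta>_def using Bs_pos[of "Suc t"] by simp

lemma Bs_Suc_mult_one_minus_\<beta>: "Bs (Suc t) * (1 - \<beta> t) = Bs t"
  using Bs_Suc_mult_\<beta>[of t] Bs_Suc[of t] by (simp add: algebra_simps)

lemma \<alpha>_squared_eq: "(\<alpha> t)^2 * S^2 = Bs (Suc t) / As (Suc t)"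
proof -
  have "(\<alpha> t)^2 * S^2 = (a (Suc t))^2 * S^2 / (As (Suc t))^2"
    unfolding \<alpha>_def by (simp add: power_divide)
  also have "\<dots> = Bs (Suc t) / As (Suc t)"
    using As_Suc_pos[of t] by (simp add: a_eq power2_eq_square[of "As (Suc t)"])
  finally show ?thesis .
qed

lemma \<alpha>_recurrence: "(\<alpha> t)^2 * (1 - \<alpha> (Suc t)) = \<alpha> (Suc t) * (\<alpha> (Suc t) - \<alpha> (Suc t) * \<beta> (Suc t))"
proof -
  have A: "As (Suc t) = As (Suc (Suc t)) * (1 - \<alpha> (Suc t))"
    using As_Suc_mult_one_minus_\<alpha>[of "Suc t"] by simp
  then have "1 - \<alpha> (Suc t) \<noteq> 0" using As_Suc_pos[of t] by auto
  have "(\<alpha> t)^2 * (1 - \<alpha> (Suc t)) * S^2 = ((\<alpha> t)^2 * S^2) * (1 - \<alpha> (Suc t))"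
    by (simp add: ac_simps)
  also have "\<dots> = Bs (Suc t) / As (Suc (Suc t))"
    unfolding \<alpha>_squared_eq A using \<open>1 - \<alpha> (Suc t) \<noteq> 0\<close> by simp
  also have "\<dots> = ((\<alpha> (Suc t))^2 * S^2) * (1 - \<beta> (Suc t))"
    unfolding \<alpha>_squared_eq Bs_Suc_mult_one_minus_\<beta>[of "Suc t", symmetric] by simp
  finally have "((\<alpha> t)^2 * (1 - \<alpha> (Suc t))) * S^2 = ((\<alpha> (Suc t))^2 * (1 - \<beta> (Suc t))) * S^2"
    by (simp add: ac_simps)
  then have "(\<alpha> t)^2 * (1 - \<alpha> (Suc t)) = (\<alpha> (Suc t))^2 * (1 - \<beta> (Suc t))"
    using S_pos by simp
  then show ?thesis by (simp add: power2_eq_square algebra_simps)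
qed

end

section \<open>Sample paths\<close>

lemma sum_weighted_if_eq:
  fixes p :: "'d::finite \<Rightarrow> real"
  assumes "(\<Sum>i\<in>UNIV. p i) = 1"
  shows "(\<Sum>i\<in>UNIV. p i * (if j = i then s else r)) = r + p j * (s - r)"
proof -
  have "(\<Sum>i\<in>UNIV. p i * (if j = i then s else r)) = (\<Sum>i\<in>UNIV. p i * r + (if i = j then p i * (s - r) else 0))"
    by (intro sum.cong) (auto simp: algebra_simps)
  also have "\<dots> = r * (\<Sum>i\<in>UNIV. p i) + p j * (s - r)"
    by (simp add: sum.distrib sum_distrib_right[symmetric])
  finally show ?thesis using assms by simp
qed

lemma paths_0: "paths 0 = {\<lambda>_. undefined}"
  unfolding paths_def by simp

lemma sum_paths_Suc:
  fixes h :: "(nat \<Rightarrow> 'd::finite) \<Rightarrow> real"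
  shows "(\<Sum>\<xi>\<in>paths (Suc t). h \<xi>) = (\<Sum>\<xi>\<in>paths t. \<Sum>i\<in>UNIV. h (\<xi>(t := i)))"
proof -
  have eq: "paths (Suc t) = (\<lambda>(i, \<xi>). \<xi>(t := i)) ` (UNIV \<times> paths t)"
    unfolding paths_def lessThan_Suc by (rule PiE_insert_eq)
  have inj: "inj_on (\<lambda>(i, \<xi>). \<xi>(t := i)) (UNIV \<times> (paths t :: (nat \<Rightarrow> 'd) set))"
    unfolding paths_def by (rule inj_combinator) simp
  have "(\<Sum>\<xi>\<in>paths (Suc t). h \<xi>) = (\<Sum>(i, \<xi>)\<in>UNIV \<times> paths t. h (\<xi>(t := i)))"
    unfolding eq by (subst sum.reindex[OF inj]) (simp add: case_prod_unfold)
  also have "\<dots> = (\<Sum>\<xi>\<in>paths t. \<Sum>i\<in>UNIV. h (\<xi>(t := i)))"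
    by (subst sum.cartesian_product[symmetric]) (rule sum.swap)
  finally show ?thesis .
qed

lemma path_prob_fun_upd: "path_prob p (Suc t) (\<xi>(t := i)) = path_prob p t \<xi> * p i"
  unfolding path_prob_def by (simp add: lessThan_Suc)

lemma path_prob_nonneg: "(\<And>i. p i \<ge> 0) \<Longrightarrow> path_prob p t \<xi> \<ge> 0"
  unfolding path_prob_def by (rule prod_nonneg) simp

lemma sum_path_prob:
  fixes p :: "'d::finite \<Rightarrow> real"
  assumes "(\<Sum>i\<in>UNIV. p i) = 1"
  shows "(\<Sum>\<xi>\<in>paths t. path_prob p t \<xi>) = 1"
proof (induction t)
  case 0
  show ?case by (simp add: paths_0 path_prob_def)
next
  case (Suc t)
  then show ?case by (simp add: sum_paths_Suc path_prob_fun_upd sum_distrib_left[symmetric] assms)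
qed

section \<open>Generalized APCG\<close>

definition hat_pair :: "real^'d \<Rightarrow> ('d \<Rightarrow> real) \<Rightarrow> 'd \<Rightarrow> real \<times> real" where
  "hat_pair x X j = (x $ j, X j)"

locale apcg = apcg_step_sizes \<sigma> S a As Bs + orthogonal_projector P
  for \<sigma> S :: real and a As Bs :: "nat \<Rightarrow> real" and P :: "real^'d::finite^'d" +
  fixes f :: "real^'d \<Rightarrow> real" and grad :: "real^'d \<Rightarrow> real^'d"
    and \<psi> :: "'d \<Rightarrow> real \<Rightarrow> ereal" and M p :: "'d \<Rightarrow> real" and \<theta> :: "real^'d"
  assumes grad: "\<And>x. (f has_derivative (\<lambda>h. grad x \<bullet> h)) (at x)"
    and strong: "\<And>x y. f x - f y \<ge> grad y \<bullet> (P *v (x - y)) + \<sigma> / 2 * ((x - y) \<bullet> (P *v (x - y)))"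
    and smooth: "\<And>i x h. \<bar>grad (x + h *\<^sub>R axis i 1) $ i - grad x $ i\<bar> \<le> M i * \<bar>h\<bar>"
    and psi_convex: "\<And>i. convex_ext (\<psi> i)"
    and prox_exists: "\<And>i \<eta> z. \<eta> > 0 \<Longrightarrow> \<exists>v. is_prox \<eta> (\<psi> i) z v"
    and diag_or_zero: "\<And>i. P $ i $ i = 1 \<or> \<psi> i = (\<lambda>_. 0)"
    and p_pos: "\<And>i. p i > 0" and p_sum: "(\<Sum>i\<in>UNIV. p i) = 1"
    and theta_finite: "\<And>i. \<psi> i (\<theta> $ i) \<noteq> \<infinity>"
    and S_cond: "\<And>i. S^2 \<ge> M i * P $ i $ i / (p i)^2"
    and step_cond: "\<And>i t. 1 - \<sigma> * a (Suc t) / Bs (Suc t) - (a (Suc t) / As (Suc t)) * P $ i $ i / p i \<ge> 0"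
begin

(* ypoint, vnext and xnext are y_t, v_{t+1} and x_{t+1} of the paper when coordinate i is sampled;
   wpoint is (1 - beta_t) v_t + beta_t y_t, the point from which the coordinate step for v starts. *)
definition \<eta> :: "nat \<Rightarrow> 'd \<Rightarrow> real" where "\<eta> t i = a (Suc t) / (Bs (Suc t) * p i)"

definition ypoint :: "nat \<Rightarrow> real^'d \<Rightarrow> real^'d \<Rightarrow> real^'d" where
  "ypoint t x v = (1 / (1 - \<alpha> t * \<beta> t)) *\<^sub>R ((1 - \<alpha> t) *\<^sub>R x + (\<alpha> t * (1 - \<beta> t)) *\<^sub>R v)"

definition wpoint :: "nat \<Rightarrow> real^'d \<Rightarrow> real^'d \<Rightarrow> real^'d" where
  "wpoint t x v = (1 - \<beta> t) *\<^sub>R v + \<beta> t *\<^sub>R ypoint t x v"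

definition vprox :: "nat \<Rightarrow> real^'d \<Rightarrow> real^'d \<Rightarrow> 'd \<Rightarrow> real" where
  "vprox t x v j = prox (\<eta> t j) (\<psi> j) (wpoint t x v $ j - \<eta> t j * grad (ypoint t x v) $ j)"

definition vnext :: "nat \<Rightarrow> real^'d \<Rightarrow> real^'d \<Rightarrow> 'd \<Rightarrow> real^'d" where
  "vnext t x v i = (\<chi> j. if j = i then vprox t x v i else wpoint t x v $ j)"

definition xnext :: "nat \<Rightarrow> real^'d \<Rightarrow> real^'d \<Rightarrow> 'd \<Rightarrow> real^'d" where
  "xnext t x v i = ypoint t x v + (\<alpha> t * P $ i $ i / p i) *\<^sub>R (vnext t x v i - wpoint t x v)"

abbreviation run :: "(nat \<Rightarrow> 'd) \<Rightarrow> nat \<Rightarrow> (real^'d) \<times> (real^'d)" where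
  "run \<omega> t \<equiv> apcg_run grad P p \<psi> a As Bs \<sigma> \<omega> t"

lemma run_Suc:
  "run \<omega> (Suc t) = (xnext t (fst (run \<omega> t)) (snd (run \<omega> t)) (\<omega> t), vnext t (fst (run \<omega> t)) (snd (run \<omega> t)) (\<omega> t))"
  unfolding apcg_run.simps apcg_step_def Let_def xnext_def vnext_def vprox_def ypoint_def wpoint_def
    \<alpha>_def \<beta>_def \<eta>_def
  by (simp add: vec_eq_iff axis_def)

lemma \<eta>_pos: "\<eta> t i > 0"
  unfolding \<eta>_def using a_pos[of t] Bs_pos[of "Suc t"] p_pos[of i] by simp

lemma ypoint_eq: "ypoint t x v = (1 - \<alpha> t) *\<^sub>R x + \<alpha> t *\<^sub>R wpoint t x v"
proof -
  have "(1 - \<alpha> t * \<beta> t) *\<^sub>R ypoint t x v = (1 - \<alpha> t) *\<^sub>R x + (\<alpha> t * (1 - \<beta> t)) *\<^sub>R v"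
    unfolding ypoint_def using \<alpha>_mult_\<beta>_less_1[of t] by simp
  then show ?thesis unfolding wpoint_def by (simp add: algebra_simps)
qed

lemma vnext_minus_wpoint: "vnext t x v i - wpoint t x v = (vprox t x v i - wpoint t x v $ i) *\<^sub>R axis i 1"
  unfolding vnext_def by (simp add: vec_eq_iff axis_def)

lemma is_prox_vprox:
  "is_prox (\<eta> t j) (\<psi> j) (wpoint t x v $ j - \<eta> t j * grad (ypoint t x v) $ j) (vprox t x v j)"
  unfolding vprox_def by (rule is_prox_prox) (rule prox_exists[OF \<eta>_pos])

definition psi_val :: "'d \<Rightarrow> real \<Rightarrow> real" where "psi_val j s = real_of_ereal (\<psi> j s)"

lemma psi_val_eq: "\<psi> j s \<noteq> \<infinity> \<Longrightarrow> \<psi> j s = ereal (psi_val j s)"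
  unfolding psi_val_def using convex_ext_not_MInfty[OF psi_convex] by (cases "\<psi> j s") auto

lemma vprox_finite: "\<psi> j (vprox t x v j) \<noteq> \<infinity>"
  by (rule is_prox_finite[OF is_prox_vprox theta_finite])

section \<open>Expected decrease of the potential\<close>

lemma smoothness_term_bound:
  fixes t :: nat and i :: 'd and d g :: real
  defines "h \<equiv> \<alpha> t * P $ i $ i / p i * d"
  shows "p i * (2 * As (Suc t) * (h * g + M i / 2 * h^2))
    \<le> 2 * a (Suc t) * P $ i $ i * d * g + Bs (Suc t) * p i * P $ i $ i * d^2"
proof -
  let ?A = "As (Suc t)" and ?R = "P $ i $ i"
  have p: "p i > 0" by (rule p_pos)
  have A\<alpha>2: "?A * (\<alpha> t)^2 * S^2 = Bs (Suc t)"
    using \<alpha>_squared_eq[of t] As_Suc_pos[of t] by (simp add: field_simps)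
  have "p i * (2 * ?A * (h * g)) = 2 * a (Suc t) * ?R * d * g"
    unfolding h_def using p As_Suc_mult_\<alpha>[of t] by (simp add: field_simps)
  moreover have "p i * (2 * ?A * (M i / 2 * h^2)) \<le> Bs (Suc t) * p i * ?R * d^2"
  proof -
    have "p i * (2 * ?A * (M i / 2 * h^2)) = (?A * (\<alpha> t)^2) * (M i * ?R / (p i)^2) * (?R * d^2 * p i)"
      unfolding h_def using p by (simp add: field_simps power2_eq_square)
    also have "\<dots> \<le> (?A * (\<alpha> t)^2) * S^2 * (?R * d^2 * p i)"
      using S_cond[of i] diag_nonneg[of i] p As_Suc_pos[of t] by (intro mult_right_mono mult_left_mono) auto
    also have "\<dots> = Bs (Suc t) * p i * ?R * d^2" using A\<alpha>2 by (simp add: ac_simps)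
    finally show ?thesis .
  qed
  ultimately show ?thesis unfolding distrib_left by linarith
qed

lemma prox_term_bound:
  fixes t :: nat and x v :: "real^'d" and i :: 'd
  defines "w \<equiv> wpoint t x v"
  defines "g \<equiv> grad (ypoint t x v) $ i" and "c \<equiv> (P *v (w - \<theta>)) $ i" and "d \<equiv> vprox t x v i - w $ i"
  shows "2 * a (Suc t) * P $ i $ i * d * g + Bs (Suc t) * p i * P $ i $ i * d^2
      + Bs (Suc t) * p i * (2 * d * c + d^2 * P $ i $ i)
    \<le> 2 * a (Suc t) * (psi_val i (\<theta> $ i) - psi_val i (vprox t x v i)) - 2 * a (Suc t) * g * c"
proof -
  have pos: "a (Suc t) > 0" "Bs (Suc t) > 0" "p i > 0" using a_pos Bs_pos p_pos by auto
  have \<eta>: "\<eta> t i = a (Suc t) / (Bs (Suc t) * p i)" by (rule \<eta>_def)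
  consider "P $ i $ i = 1" | "\<psi> i = (\<lambda>_. 0)" using diag_or_zero by blast
  then show ?thesis
  proof cases
    case 1
    have v\<^sub>i: "vprox t x v i = w $ i + d" by (simp add: d_def)
    have \<theta>\<^sub>i: "\<theta> $ i = w $ i - c" unfolding c_def using component_if_diag_eq_1[OF 1] by simp
    have "psi_val i (vprox t x v i) + ((w $ i - \<eta> t i * g) - vprox t x v i) * (\<theta> $ i - vprox t x v i) / \<eta> t i
        \<le> psi_val i (\<theta> $ i)"
      unfolding psi_val_def w_def g_def
      by (rule prox_subgradient_inequality[OF psi_convex is_prox_vprox \<eta>_pos theta_finite])
    then have "2 * a (Suc t) * (psi_val i (vprox t x v i)
        + ((w $ i - \<eta> t i * g) - vprox t x v i) * (\<theta> $ i - vprox t x v i) / \<eta> t i)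
        \<le> 2 * a (Suc t) * psi_val i (\<theta> $ i)"
      using pos by simp
    moreover have "2 * a (Suc t) * (((w $ i - \<eta> t i * g) - vprox t x v i) * (\<theta> $ i - vprox t x v i) / \<eta> t i)
        = 2 * Bs (Suc t) * p i * (d * c + d^2) + 2 * a (Suc t) * g * c + 2 * a (Suc t) * g * d"
      unfolding v\<^sub>i \<theta>\<^sub>i \<eta> using pos by (simp add: field_simps power2_eq_square)
    moreover have "2 * a (Suc t) * P $ i $ i * d * g + Bs (Suc t) * p i * P $ i $ i * d^2
        + Bs (Suc t) * p i * (2 * d * c + d^2 * P $ i $ i)
        = 2 * Bs (Suc t) * p i * (d * c + d^2) + 2 * a (Suc t) * g * d"
      unfolding 1 by (simp add: algebra_simps)
    ultimately show ?thesis by (simp add: distrib_left right_diff_distrib)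
  next
    case 2
    have "vprox t x v i = w $ i - \<eta> t i * g"
      unfolding vprox_def 2 w_def g_def using prox_zero[OF \<eta>_pos] by simp
    then have d: "d = - (a (Suc t) / (Bs (Suc t) * p i)) * g" unfolding d_def \<eta> by simp
    show ?thesis unfolding d using pos by (simp add: psi_val_def 2 field_simps power2_eq_square)
  qed
qed

lemma coordinate_step_bound:
  fixes t :: nat and x v :: "real^'d" and i :: 'd
  defines "y \<equiv> ypoint t x v" and "w \<equiv> wpoint t x v"
  defines "g \<equiv> grad y" and "c \<equiv> P *v (w - \<theta>)" and "d \<equiv> vprox t x v i - w $ i"
  shows "p i * (Bs (Suc t) * sqnorm_P P (vnext t x v i - \<theta>) + 2 * As (Suc t) * f (xnext t x v i))
    \<le> p i * (Bs (Suc t) * sqnorm_P P (w - \<theta>) + 2 * As (Suc t) * f y)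
       + 2 * a (Suc t) * (psi_val i (\<theta> $ i) - psi_val i (vprox t x v i)) - 2 * a (Suc t) * (g $ i * c $ i)"
proof -
  let ?h = "\<alpha> t * P $ i $ i / p i * d"
  have vnext: "vnext t x v i = w + d *\<^sub>R axis i 1"
    using vnext_minus_wpoint[of t x v i] unfolding w_def d_def by (simp add: algebra_simps)
  have "vnext t x v i - \<theta> = (w - \<theta>) + d *\<^sub>R axis i 1" using vnext by simp
  then have "sqnorm_P P (vnext t x v i - \<theta>) = sqnorm_P P (w - \<theta>) + 2 * d * c $ i + d^2 * P $ i $ i"
    unfolding c_def by (simp only: sqnorm_P_add_axis)
  then have "p i * (Bs (Suc t) * sqnorm_P P (vnext t x v i - \<theta>))
      = p i * (Bs (Suc t) * sqnorm_P P (w - \<theta>)) + Bs (Suc t) * p i * (2 * d * c $ i + d^2 * P $ i $ i)"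
    by (simp add: algebra_simps)
  moreover have "f (xnext t x v i) \<le> f y + (?h * g $ i + M i / 2 * ?h^2)"
  proof -
    have "xnext t x v i = y + ?h *\<^sub>R axis i 1"
      unfolding xnext_def vnext y_def w_def by (simp add: algebra_simps)
    then show ?thesis unfolding g_def add.assoc[symmetric]
      by (simp only:) (rule coordinate_descent_inequality[OF grad smooth])
  qed
  then have "(p i * (2 * As (Suc t))) * f (xnext t x v i)
      \<le> (p i * (2 * As (Suc t))) * (f y + (?h * g $ i + M i / 2 * ?h^2))"
    by (rule mult_left_mono) (use p_pos[of i] As_Suc_pos[of t] in simp)
  then have "p i * (2 * As (Suc t) * f (xnext t x v i))
      \<le> p i * (2 * As (Suc t) * f y) + p i * (2 * As (Suc t) * (?h * g $ i + M i / 2 * ?h^2))"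
    by (simp add: distrib_left mult.assoc)
  moreover note smoothness_term_bound[where t=t and i=i and d=d and g="g $ i"]
    and prox_term_bound[where t=t and x=x and v=v and i=i, folded w_def y_def, folded g_def c_def d_def]
  ultimately show ?thesis unfolding distrib_left by linarith
qed

definition F_theta :: real where "F_theta = f \<theta> + (\<Sum>j\<in>UNIV. psi_val j (\<theta> $ j))"

definition potential :: "nat \<Rightarrow> real^'d \<Rightarrow> real^'d \<Rightarrow> ('d \<Rightarrow> real) \<Rightarrow> real" where
  "potential t x v X = Bs t * sqnorm_P P (v - \<theta>) + 2 * As t * (f x + (\<Sum>j\<in>UNIV. X j) - F_theta)"

(* The hat values X j and V j are real bounds for psi_j at the j-th coordinates of x and v. They
   follow the affine updates of the coordinates, the new prox point contributing its own value. *)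
definition hat_w :: "nat \<Rightarrow> ('d \<Rightarrow> real) \<Rightarrow> ('d \<Rightarrow> real) \<Rightarrow> 'd \<Rightarrow> real" where
  "hat_w t X V j = ((1 - \<beta> t) * V j + \<beta> t * (1 - \<alpha> t) * X j) / (1 - \<alpha> t * \<beta> t)"

definition hat_x_next :: "nat \<Rightarrow> 'd \<Rightarrow> real^'d \<Rightarrow> real^'d \<Rightarrow> ('d \<Rightarrow> real) \<Rightarrow> ('d \<Rightarrow> real) \<Rightarrow> 'd \<Rightarrow> real" where
  "hat_x_next t i x v X V j = (if j = i
     then (1 - \<alpha> t) * X j + \<alpha> t * (1 - 1 / p j) * hat_w t X V j + \<alpha> t / p j * psi_val j (vprox t x v j)
     else (1 - \<alpha> t) * X j + \<alpha> t * hat_w t X V j)"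

definition hat_v_next :: "nat \<Rightarrow> 'd \<Rightarrow> real^'d \<Rightarrow> real^'d \<Rightarrow> ('d \<Rightarrow> real) \<Rightarrow> ('d \<Rightarrow> real) \<Rightarrow> 'd \<Rightarrow> real" where
  "hat_v_next t i x v X V j = (if j = i then psi_val j (vprox t x v j) else hat_w t X V j)"

lemma expected_hat_x_next:
  "(\<Sum>i\<in>UNIV. p i * (\<Sum>j\<in>UNIV. hat_x_next t i x v X V j))
    = (1 - \<alpha> t) * (\<Sum>j\<in>UNIV. X j) + \<alpha> t * (\<Sum>j\<in>UNIV. psi_val j (vprox t x v j))"
proof -
  have "(\<Sum>i\<in>UNIV. p i * hat_x_next t i x v X V j) = (1 - \<alpha> t) * X j + \<alpha> t * psi_val j (vprox t x v j)" for j
    unfolding hat_x_next_def sum_weighted_if_eq[OF p_sum] using p_pos[of j] by (simp add: field_simps)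
  then show ?thesis
    by (simp add: sum_distrib_left sum.distrib flip: sum.swap[of _ UNIV UNIV])
qed

lemma expected_coordinate_step_bound:
  fixes t :: nat and x v :: "real^'d"
  defines "y \<equiv> ypoint t x v" and "w \<equiv> wpoint t x v"
  shows "(\<Sum>i\<in>UNIV. p i * (Bs (Suc t) * sqnorm_P P (vnext t x v i - \<theta>) + 2 * As (Suc t) * f (xnext t x v i)))
    \<le> Bs (Suc t) * sqnorm_P P (w - \<theta>) + 2 * As (Suc t) * f y
       + 2 * a (Suc t) * (\<Sum>j\<in>UNIV. psi_val j (\<theta> $ j)) - 2 * a (Suc t) * (\<Sum>j\<in>UNIV. psi_val j (vprox t x v j))
       - 2 * a (Suc t) * (grad y \<bullet> (P *v (w - \<theta>)))"
proof -
  let ?K = "Bs (Suc t) * sqnorm_P P (w - \<theta>) + 2 * As (Suc t) * f y"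
  have "(\<Sum>i\<in>UNIV. p i * (Bs (Suc t) * sqnorm_P P (vnext t x v i - \<theta>) + 2 * As (Suc t) * f (xnext t x v i)))
      \<le> (\<Sum>i\<in>UNIV. p i * ?K + 2 * a (Suc t) * (psi_val i (\<theta> $ i) - psi_val i (vprox t x v i))
          - 2 * a (Suc t) * (grad y $ i * (P *v (w - \<theta>)) $ i))"
    unfolding y_def w_def by (intro sum_mono coordinate_step_bound)
  also have "\<dots> = ?K * (\<Sum>i\<in>UNIV. p i)
      + 2 * a (Suc t) * ((\<Sum>j\<in>UNIV. psi_val j (\<theta> $ j)) - (\<Sum>j\<in>UNIV. psi_val j (vprox t x v j)))
      - 2 * a (Suc t) * (grad y \<bullet> (P *v (w - \<theta>)))"
    by (simp add: sum.distrib sum_subtractf sum_distrib_left sum_distrib_right inner_vec_def ac_simps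
        right_diff_distrib)
  finally show ?thesis using p_sum by (simp add: right_diff_distrib)
qed

lemma wpoint_sqnorm_bound:
  "Bs (Suc t) * sqnorm_P P (wpoint t x v - \<theta>)
    \<le> Bs t * sqnorm_P P (v - \<theta>) + a (Suc t) * \<sigma> * sqnorm_P P (ypoint t x v - \<theta>)"
proof -
  have "wpoint t x v - \<theta> = (1 - \<beta> t) *\<^sub>R (v - \<theta>) + \<beta> t *\<^sub>R (ypoint t x v - \<theta>)"
    unfolding wpoint_def by (simp add: algebra_simps)
  then have "sqnorm_P P (wpoint t x v - \<theta>) \<le> (1 - \<beta> t) * sqnorm_P P (v - \<theta>) + \<beta> t * sqnorm_P P (ypoint t x v - \<theta>)"
    using \<beta>_nonneg[of t] \<beta>_less_1[of t] by (simp add: sqnorm_P_convex)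
  then have "Bs (Suc t) * sqnorm_P P (wpoint t x v - \<theta>)
      \<le> Bs (Suc t) * ((1 - \<beta> t) * sqnorm_P P (v - \<theta>) + \<beta> t * sqnorm_P P (ypoint t x v - \<theta>))"
    using Bs_pos[of "Suc t"] by (intro mult_left_mono) auto
  also have "\<dots> = (Bs (Suc t) * (1 - \<beta> t)) * sqnorm_P P (v - \<theta>) + (Bs (Suc t) * \<beta> t) * sqnorm_P P (ypoint t x v - \<theta>)"
    by (simp add: algebra_simps)
  finally have "Bs (Suc t) * sqnorm_P P (wpoint t x v - \<theta>)
      \<le> (Bs (Suc t) * (1 - \<beta> t)) * sqnorm_P P (v - \<theta>) + (Bs (Suc t) * \<beta> t) * sqnorm_P P (ypoint t x v - \<theta>)" .
  then show ?thesis by (simp add: Bs_Suc_mult_one_minus_\<beta> Bs_Suc_mult_\<beta> ac_simps)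
qed

lemma ypoint_balance: "As (Suc t) *\<^sub>R ypoint t x v = As t *\<^sub>R x + a (Suc t) *\<^sub>R wpoint t x v"
  unfolding ypoint_eq scaleR_add_right scaleR_scaleR As_Suc_mult_one_minus_\<alpha> As_Suc_mult_\<alpha> ..

lemma potential_descent_bound:
  fixes t :: nat and x v :: "real^'d" and X :: "'d \<Rightarrow> real"
  defines "y \<equiv> ypoint t x v" and "w \<equiv> wpoint t x v"
  defines "L \<equiv> \<lambda>u. grad y \<bullet> (P *v u)"
  shows "Bs (Suc t) * sqnorm_P P (w - \<theta>) + 2 * As (Suc t) * f y + 2 * a (Suc t) * (\<Sum>j\<in>UNIV. psi_val j (\<theta> $ j))
       - 2 * a (Suc t) * L (w - \<theta>) + 2 * As t * (\<Sum>j\<in>UNIV. X j) - 2 * As (Suc t) * F_theta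
    \<le> potential t x v X"
proof -
  have "0 \<le> \<sigma> / 2 * sqnorm_P P (x - y)" using sigma_nonneg sqnorm_P_nonneg[of "x - y"] by simp
  then have "f x - f y \<ge> L (x - y)"
    using strong[where x=x and y=y] unfolding L_def sqnorm_P_def by linarith
  then have "As t * L (x - y) \<le> As t * (f x - f y)" by (rule mult_left_mono) (rule As_nonneg)
  then have conv_x: "As t * f x - As t * f y \<ge> As t * L (x - y)" by (simp add: right_diff_distrib)
  have "f \<theta> - f y \<ge> L (\<theta> - y) + \<sigma> / 2 * sqnorm_P P (y - \<theta>)"
    using strong[where x=\<theta> and y=y] sqnorm_P_minus_commute[of P \<theta> y] unfolding L_def sqnorm_P_def by simp
  then have "a (Suc t) * (L (\<theta> - y) + \<sigma> / 2 * sqnorm_P P (y - \<theta>)) \<le> a (Suc t) * (f \<theta> - f y)"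
    by (rule mult_left_mono) (use a_pos[of t] in simp)
  then have conv_\<theta>: "a (Suc t) * f \<theta> - a (Suc t) * f y
      \<ge> a (Suc t) * L (\<theta> - y) + a (Suc t) * \<sigma> * sqnorm_P P (y - \<theta>) / 2"
    by (simp add: algebra_simps)
  have "As t *\<^sub>R (x - y) + a (Suc t) *\<^sub>R (\<theta> - y) + a (Suc t) *\<^sub>R (w - \<theta>) = 0"
    using ypoint_balance[of t x v] As_Suc[of t] unfolding y_def w_def by (simp add: algebra_simps)
  then have "L (As t *\<^sub>R (x - y) + a (Suc t) *\<^sub>R (\<theta> - y) + a (Suc t) *\<^sub>R (w - \<theta>)) = 0"
    unfolding L_def by simp
  then have balance: "As t * L (x - y) + a (Suc t) * L (\<theta> - y) + a (Suc t) * L (w - \<theta>) = 0"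
    unfolding L_def by (simp add: matrix_vector_right_distrib matrix_vector_mult_scaleR inner_add_right)
  have "0 \<le> a (Suc t) * \<sigma> * sqnorm_P P (y - \<theta>)"
    using a_pos[of t] sigma_nonneg sqnorm_P_nonneg[of "y - \<theta>"] by simp
  moreover have "potential t x v X = Bs t * sqnorm_P P (v - \<theta>) + 2 * (As t * f x)
      + 2 * As t * (\<Sum>j\<in>UNIV. X j) - 2 * As t * F_theta"
    unfolding potential_def by (simp add: algebra_simps)
  moreover have "2 * As (Suc t) * f y = 2 * (As t * f y) + 2 * (a (Suc t) * f y)"
    "2 * As (Suc t) * F_theta = 2 * As t * F_theta + 2 * a (Suc t) * f \<theta>
      + 2 * a (Suc t) * (\<Sum>j\<in>UNIV. psi_val j (\<theta> $ j))"
    unfolding As_Suc F_theta_def by (simp_all add: algebra_simps)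
  ultimately show ?thesis
    using conv_x conv_\<theta> balance wpoint_sqnorm_bound[of t x v, folded y_def w_def] by linarith
qed

lemma expected_potential_step:
  "(\<Sum>i\<in>UNIV. p i * potential (Suc t) (xnext t x v i) (vnext t x v i) (hat_x_next t i x v X V))
    \<le> potential t x v X"
proof -
  let ?E = "\<Sum>i\<in>UNIV. p i * (Bs (Suc t) * sqnorm_P P (vnext t x v i - \<theta>) + 2 * As (Suc t) * f (xnext t x v i))"
  let ?H = "\<Sum>i\<in>UNIV. p i * (\<Sum>j\<in>UNIV. hat_x_next t i x v X V j)"
  have "(\<Sum>i\<in>UNIV. p i * potential (Suc t) (xnext t x v i) (vnext t x v i) (hat_x_next t i x v X V))
      = ?E + 2 * As (Suc t) * ?H - 2 * As (Suc t) * F_theta * (\<Sum>i\<in>UNIV. p i)"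
    unfolding potential_def
    by (simp add: algebra_simps sum.distrib sum_subtractf sum_distrib_left sum_distrib_right)
  also have "2 * As (Suc t) * ?H = 2 * (As (Suc t) * (1 - \<alpha> t)) * (\<Sum>j\<in>UNIV. X j)
      + 2 * (As (Suc t) * \<alpha> t) * (\<Sum>j\<in>UNIV. psi_val j (vprox t x v j))"
    unfolding expected_hat_x_next by algebra
  also have "\<dots> = 2 * As t * (\<Sum>j\<in>UNIV. X j) + 2 * a (Suc t) * (\<Sum>j\<in>UNIV. psi_val j (vprox t x v j))"
    by (simp only: As_Suc_mult_one_minus_\<alpha> As_Suc_mult_\<alpha>)
  finally show ?thesis
    using expected_coordinate_step_bound[of t x v] potential_descent_bound[of t x v X] p_sum by simp
qed

section \<open>Hat values bound the nonsmooth part\<close>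

lemma p_le_1: "p j \<le> 1"
proof -
  have "p j \<le> (\<Sum>i\<in>UNIV. p i)" by (rule member_le_sum) (auto simp: less_imp_le[OF p_pos])
  then show ?thesis using p_sum by simp
qed

lemma p_less_1: assumes "i \<noteq> j" shows "p j < 1"
proof -
  have "p i + p j = (\<Sum>k\<in>{i, j}. p k)" using assms by simp
  also have "\<dots> \<le> (\<Sum>k\<in>UNIV. p k)" by (rule sum_mono2) (auto simp: less_imp_le[OF p_pos])
  finally show ?thesis using p_sum p_pos[of i] by simp
qed

lemma sigma_le_M: assumes "P $ j $ j = 1" shows "\<sigma> \<le> M j"
proof -
  let ?e = "axis j 1 :: real^'d"
  have "f ?e - f 0 \<ge> grad 0 \<bullet> ?e + \<sigma> / 2"
    using strong[where x = ?e and y = 0] apply_axis_if_diag_eq_1[OF assms] by (simp add: inner_axis_axis)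
  moreover have "f (0 + 1 *\<^sub>R ?e) \<le> f 0 + 1 * grad 0 $ j + M j / 2 * 1^2"
    by (rule coordinate_descent_inequality[OF grad smooth])
  ultimately show ?thesis by (simp add: inner_axis)
qed

lemma \<alpha>_mult_\<beta>_le_p_squared: assumes "P $ j $ j = 1" shows "\<alpha> t * \<beta> t \<le> (p j)^2"
proof -
  have "M j \<le> S^2 * (p j)^2" using S_cond[of j] p_pos[of j] assms by (simp add: field_simps)
  then have "\<sigma> \<le> S^2 * (p j)^2" using sigma_le_M[OF assms] by simp
  then show ?thesis unfolding \<alpha>_mult_\<beta> using S_pos by (simp add: field_simps)
qed

lemma \<alpha>_le_p_mult: assumes "P $ j $ j = 1" shows "\<alpha> t \<le> p j * (1 - \<beta> t)"
proof -
  have "\<alpha> t / p j \<le> 1 - \<beta> t" using step_cond[where i=j and t=t] assms unfolding \<alpha>_def \<beta>_def by simp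
  then show ?thesis using p_pos[of j] by (simp add: divide_le_eq mult.commute)
qed

lemma \<alpha>_le_p: assumes "P $ j $ j = 1" shows "\<alpha> t \<le> p j"
  using \<alpha>_le_p_mult[OF assms, of t] mult_nonneg_nonneg[OF less_imp_le[OF p_pos[of j]] \<beta>_nonneg[of t]]
  by (simp add: right_diff_distrib)

(* Lower bound for the weight of v_t^(j) on the segment through x_t^(j); as x_0 = v_0 it is 1 at t = 0. *)
definition mu_lower :: "nat \<Rightarrow> 'd \<Rightarrow> real" where
  "mu_lower t j = (case t of 0 \<Rightarrow> 1 | Suc s \<Rightarrow> \<alpha> s / p j)"

lemma mu_lower_pos: "mu_lower t j > 0"
  by (cases t) (auto simp: mu_lower_def \<alpha>_pos p_pos)

lemma weight_condition:
  assumes j: "P $ j $ j = 1" and \<mu>: "mu_lower t j \<le> \<mu>"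
  shows "\<alpha> t * (1 - p j) * (1 - \<beta> t) \<le> (1 - \<alpha> t) * \<mu> * (p j - \<alpha> t * \<beta> t)"
proof -
  have q: "0 \<le> \<alpha> t * \<beta> t" "\<alpha> t * \<beta> t \<le> (p j)^2"
    using \<alpha>_pos[of t] \<beta>_nonneg[of t] \<alpha>_mult_\<beta>_le_p_squared[OF j] by simp_all
  moreover have "(p j)^2 \<le> p j" using p_le_1[of j] p_pos[of j] by (simp add: power2_eq_square mult_left_le)
  ultimately have "0 \<le> (1 - \<alpha> t) * (p j - \<alpha> t * \<beta> t)" using \<alpha>_le_1[of t] by simp
  then have "mu_lower t j * ((1 - \<alpha> t) * (p j - \<alpha> t * \<beta> t)) \<le> \<mu> * ((1 - \<alpha> t) * (p j - \<alpha> t * \<beta> t))"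
    by (rule mult_right_mono[OF \<mu>])
  then have mono: "(1 - \<alpha> t) * mu_lower t j * (p j - \<alpha> t * \<beta> t) \<le> (1 - \<alpha> t) * \<mu> * (p j - \<alpha> t * \<beta> t)"
    by (simp add: ac_simps)
  have "\<alpha> t * (1 - p j) * (1 - \<beta> t) \<le> (1 - \<alpha> t) * mu_lower t j * (p j - \<alpha> t * \<beta> t)"
  proof (cases t)
    case 0
    show ?thesis
      using initial_weight_condition[OF \<alpha>_le_p[OF j] q(1)] \<alpha>_mult_\<beta>_less_1[of t] by (simp add: mu_lower_def 0)
  next
    case (Suc s)
    have rec: "(\<alpha> s)^2 * (1 - \<alpha> t) = \<alpha> t * (\<alpha> t - \<alpha> t * \<beta> t)" using \<alpha>_recurrence[of s] by (simp add: Suc)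
    have "\<alpha> t * \<alpha> t \<le> p j * (1 - \<beta> t) * \<alpha> t"
      using \<alpha>_le_p_mult[OF j, of t] \<alpha>_pos[of t] by (intro mult_right_mono) auto
    then have step: "(\<alpha> t)^2 \<le> p j * \<alpha> t - p j * (\<alpha> t * \<beta> t)" by (simp add: power2_eq_square algebra_simps)
    have "(1 - p j) * p j * \<alpha> s \<le> \<alpha> t * (p j - \<alpha> t * \<beta> t)"
      using consecutive_alpha_bound[OF \<alpha>_pos \<alpha>_less_1 \<alpha>_pos p_pos p_le_1 q rec step] As_Suc_pos[of s]
      by (simp add: Suc)
    from later_weight_condition[OF this rec \<alpha>_pos p_pos \<alpha>_pos less_imp_le[OF \<beta>_less_1]]
    show ?thesis by (simp add: mu_lower_def Suc)
  qed
  with mono show ?thesis by linarith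
qed

lemma sampled_weight_nonneg:
  assumes "P $ j $ j = 1" "mu_lower t j \<le> \<mu>"
  shows "0 \<le> sampled_weight (p j) (\<alpha> t) (\<beta> t) \<mu>"
proof -
  have "0 \<le> p j * (1 - \<alpha> t * \<beta> t) * sampled_weight (p j) (\<alpha> t) (\<beta> t) \<mu>"
    using sampled_weight_scaled(1)[where p="p j" and \<alpha>="\<alpha> t" and \<beta>="\<beta> t" and \<mu>=\<mu>]
      p_pos[of j] weight_condition[OF assms]
      \<alpha>_mult_\<beta>_less_1[of t] by simp
  moreover have "0 < p j * (1 - \<alpha> t * \<beta> t)" using p_pos[of j] \<alpha>_mult_\<beta>_less_1[of t] by simp
  ultimately show ?thesis by (simp add: zero_le_mult_iff)
qed

lemma sampled_weight_complement_nonneg: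
  assumes j: "P $ j $ j = 1" and \<mu>: "\<mu> \<le> 1"
  shows "0 \<le> 1 - \<alpha> t / p j - sampled_weight (p j) (\<alpha> t) (\<beta> t) \<mu>"
proof -
  have pos: "0 < p j * (1 - \<alpha> t * \<beta> t)" using p_pos[of j] \<alpha>_mult_\<beta>_less_1[of t] by simp
  have "(p j)^2 \<le> p j" using p_le_1[of j] p_pos[of j] by (simp add: power2_eq_square mult_left_le)
  then have "0 \<le> (1 - \<alpha> t) * (1 - \<mu>) * (p j - \<alpha> t * \<beta> t)"
    using \<alpha>_le_1[of t] \<mu> \<alpha>_mult_\<beta>_le_p_squared[OF j, of t] by simp
  then have "0 \<le> p j * (1 - \<alpha> t * \<beta> t) * (1 - \<alpha> t / p j - sampled_weight (p j) (\<alpha> t) (\<beta> t) \<mu>)"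
    using sampled_weight_scaled(2)[OF p_pos[of j] less_imp_neq[OF \<alpha>_mult_\<beta>_less_1[of t]], of \<mu>] by simp
  then show ?thesis using mult_le_cancel_left_pos[OF pos, of 0] by simp
qed

lemma wpoint_eq: "(1 - \<alpha> t * \<beta> t) *\<^sub>R wpoint t x v = (1 - \<beta> t) *\<^sub>R v + (\<beta> t * (1 - \<alpha> t)) *\<^sub>R x"
proof -
  have "wpoint t x v = (1 - \<beta> t) *\<^sub>R v + \<beta> t *\<^sub>R ((1 - \<alpha> t) *\<^sub>R x + \<alpha> t *\<^sub>R wpoint t x v)"
    by (subst (1) wpoint_def, subst ypoint_eq) (rule refl)
  then show ?thesis by (simp add: algebra_simps)
qed

lemma hat_pair_wpoint:
  "(1 - \<alpha> t * \<beta> t) *\<^sub>R hat_pair (wpoint t x v) (hat_w t X V) j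
    = (1 - \<beta> t) *\<^sub>R hat_pair v V j + (\<beta> t * (1 - \<alpha> t)) *\<^sub>R hat_pair x X j"
proof -
  have "(1 - \<alpha> t * \<beta> t) * wpoint t x v $ j = (1 - \<beta> t) * v $ j + \<beta> t * (1 - \<alpha> t) * x $ j"
    using arg_cong[OF wpoint_eq, of "\<lambda>u. u $ j", of t x v] by simp
  moreover have "(1 - \<alpha> t * \<beta> t) * hat_w t X V j = (1 - \<beta> t) * V j + \<beta> t * (1 - \<alpha> t) * X j"
    unfolding hat_w_def using \<alpha>_mult_\<beta>_less_1[of t] by simp
  ultimately show ?thesis by (simp add: hat_pair_def)
qed

lemma xnext_component:
  "xnext t x v i $ j = (1 - \<alpha> t) * x $ j + \<alpha> t * wpoint t x v $ j
     + (if j = i then \<alpha> t * P $ i $ i / p i * (vprox t x v i - wpoint t x v $ i) else 0)"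
  unfolding xnext_def vnext_minus_wpoint by (subst ypoint_eq) (simp add: axis_def)

lemma hat_pair_unsampled:
  assumes "i \<noteq> j"
  shows "hat_pair (xnext t x v i) (hat_x_next t i x v X V) j
      = (1 - \<alpha> t) *\<^sub>R hat_pair x X j + \<alpha> t *\<^sub>R hat_pair (wpoint t x v) (hat_w t X V) j"
    and "hat_pair (vnext t x v i) (hat_v_next t i x v X V) j = hat_pair (wpoint t x v) (hat_w t X V) j"
  using assms by (simp_all add: hat_pair_def xnext_component hat_x_next_def hat_v_next_def vnext_def)

lemma hat_pair_sampled:
  assumes "P $ j $ j = 1"
  shows "hat_pair (xnext t x v j) (hat_x_next t j x v X V) j
      = (1 - \<alpha> t) *\<^sub>R hat_pair x X j + (\<alpha> t * (1 - 1 / p j)) *\<^sub>R hat_pair (wpoint t x v) (hat_w t X V) j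
        + (\<alpha> t / p j) *\<^sub>R (vprox t x v j, psi_val j (vprox t x v j))"
    and "hat_pair (vnext t x v j) (hat_v_next t j x v X V) j = (vprox t x v j, psi_val j (vprox t x v j))"
  using assms p_pos[of j] by (simp_all add: hat_pair_def xnext_component hat_x_next_def hat_v_next_def vnext_def
      field_simps)

lemma vprox_in_epigraph: "(vprox t x v j, psi_val j (vprox t x v j)) \<in> ereal_epigraph (\<psi> j)"
  using psi_val_eq[OF vprox_finite] by (simp add: ereal_epigraph_def)

(* Nothing is claimed when A_t = 0: then x_t enters the potential with weight 0. *)
definition hat_invariant :: "nat \<Rightarrow> 'd \<Rightarrow> real^'d \<Rightarrow> real^'d \<Rightarrow> ('d \<Rightarrow> real) \<Rightarrow> ('d \<Rightarrow> real) \<Rightarrow> bool" where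
  "hat_invariant t j x v X V \<longleftrightarrow> (As t > 0 \<longrightarrow> hat_pair v V j \<in> ereal_epigraph (\<psi> j) \<and>
     (\<exists>\<mu> u. mu_lower t j \<le> \<mu> \<and> \<mu> \<le> 1 \<and> u \<in> ereal_epigraph (\<psi> j) \<and>
        hat_pair x X j = u + \<mu> *\<^sub>R (hat_pair v V j - u)))"

lemma hat_invariant_Suc_sampled:
  assumes j: "P $ j $ j = 1" and inv: "hat_invariant t j x v X V"
  shows "hat_invariant (Suc t) j (xnext t x v j) (vnext t x v j) (hat_x_next t j x v X V) (hat_v_next t j x v X V)"
proof -
  let ?E = "ereal_epigraph (\<psi> j)" and ?z = "(vprox t x v j, psi_val j (vprox t x v j))"
  have "\<exists>u'\<in>?E. hat_pair (xnext t x v j) (hat_x_next t j x v X V) j = u' + (\<alpha> t / p j) *\<^sub>R (?z - u')"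
  proof (cases "As t > 0")
    case True
    then obtain \<mu> u where \<mu>: "mu_lower t j \<le> \<mu>" "\<mu> \<le> 1" and u: "hat_pair v V j \<in> ?E" "u \<in> ?E"
      and x: "hat_pair x X j = u + \<mu> *\<^sub>R (hat_pair v V j - u)"
      using inv unfolding hat_invariant_def by blast
    have w: "hat_pair (wpoint t x v) (hat_w t X V) j = u + mix_weight (\<alpha> t) (\<beta> t) \<mu> *\<^sub>R (hat_pair v V j - u)"
      using \<alpha>_mult_\<beta>_less_1[of t] by (intro mix_on_segment) (simp_all add: hat_pair_wpoint flip: x)
    from sampled_on_segment[OF convex_ereal_epigraph[OF psi_convex] u sampled_weight_nonneg[OF j \<mu>(1)]
        sampled_weight_complement_nonneg[OF j \<mu>(2)]]
    show ?thesis unfolding hat_pair_sampled(1)[OF j] x w by blast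
  next
    case False
    then have "\<alpha> t = 1" "p j = 1" using \<alpha>_eq_1 \<alpha>_le_p[OF j, of t] p_le_1[of j] by auto
    then show ?thesis unfolding hat_pair_sampled(1)[OF j] using vprox_in_epigraph[of t x v j] by auto
  qed
  then obtain u' where "u' \<in> ?E" "hat_pair (xnext t x v j) (hat_x_next t j x v X V) j = u' + (\<alpha> t / p j) *\<^sub>R (?z - u')"
    by blast
  moreover have "\<alpha> t / p j \<le> 1" using \<alpha>_le_p[OF j, of t] p_pos[of j] by simp
  ultimately show ?thesis
    unfolding hat_invariant_def hat_pair_sampled(2)[OF j] using vprox_in_epigraph[of t x v j]
    by (intro impI conjI exI[of _ "\<alpha> t / p j"] exI[of _ u']) (simp_all add: mu_lower_def)
qed

lemma hat_invariant_Suc_unsampled: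
  assumes j: "P $ j $ j = 1" and ij: "i \<noteq> j" and inv: "hat_invariant t j x v X V"
  shows "hat_invariant (Suc t) j (xnext t x v i) (vnext t x v i) (hat_x_next t i x v X V) (hat_v_next t i x v X V)"
proof -
  let ?E = "ereal_epigraph (\<psi> j)"
  have "As t > 0"
  proof (rule ccontr)
    assume "\<not> As t > 0"
    then have "p j = 1" using \<alpha>_eq_1 \<alpha>_le_p[OF j, of t] p_le_1[of j] by force
    with p_less_1[OF ij] show False by simp
  qed
  then obtain \<mu> u where \<mu>: "mu_lower t j \<le> \<mu>" "\<mu> \<le> 1" and u: "hat_pair v V j \<in> ?E" "u \<in> ?E"
    and x: "hat_pair x X j = u + \<mu> *\<^sub>R (hat_pair v V j - u)"
    using inv unfolding hat_invariant_def by blast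
  let ?c = "mix_weight (\<alpha> t) (\<beta> t) \<mu>" and ?m = "unsampled_weight (\<alpha> t) (\<beta> t) \<mu>"
  have \<mu>0: "0 \<le> \<mu>" using \<mu>(1) mu_lower_pos[of t j] by simp
  note c = mix_weight_bounds[OF \<alpha>_pos[of t] \<alpha>_le_1[of t] \<beta>_nonneg[of t] \<beta>_less_1[of t] \<mu>0 \<mu>(2)]
  have w: "hat_pair (wpoint t x v) (hat_w t X V) j = u + ?c *\<^sub>R (hat_pair v V j - u)"
    using \<alpha>_mult_\<beta>_less_1[of t] by (intro mix_on_segment) (simp_all add: hat_pair_wpoint flip: x)
  have "hat_pair (wpoint t x v) (hat_w t X V) j \<in> ?E"
    unfolding w using c by (intro convex_segment_point[OF convex_ereal_epigraph[OF psi_convex] u(2,1)]) auto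
  moreover have "hat_pair (xnext t x v i) (hat_x_next t i x v X V) j
      = u + ?m *\<^sub>R (hat_pair (wpoint t x v) (hat_w t X V) j - u)"
    unfolding hat_pair_unsampled(1)[OF ij] x w by (rule unsampled_on_segment) (use c(1) in simp)
  moreover note unsampled_weight_bounds[OF \<alpha>_pos[of t] \<alpha>_le_1[of t] \<beta>_nonneg[of t] \<beta>_less_1[of t]
      \<mu>0 \<mu>(2) p_pos[of j] sampled_weight_nonneg[OF j \<mu>(1)]]
  ultimately show ?thesis
    unfolding hat_invariant_def hat_pair_unsampled(2)[OF ij] using u(2)
    by (intro impI conjI exI[of _ ?m] exI[of _ u]) (simp_all add: mu_lower_def)
qed

lemma hat_invariant_Suc:
  assumes "P $ j $ j = 1" and "hat_invariant t j x v X V"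
  shows "hat_invariant (Suc t) j (xnext t x v i) (vnext t x v i) (hat_x_next t i x v X V) (hat_v_next t i x v X V)"
  using assms hat_invariant_Suc_sampled hat_invariant_Suc_unsampled by (cases "i = j") auto

section \<open>Expectation over sample paths\<close>

primrec hat_run :: "(nat \<Rightarrow> 'd) \<Rightarrow> nat \<Rightarrow> ('d \<Rightarrow> real) \<times> ('d \<Rightarrow> real)" where
  "hat_run \<xi> 0 = ((\<lambda>j. psi_val j 0), (\<lambda>j. psi_val j 0))"
| "hat_run \<xi> (Suc t) =
    (hat_x_next t (\<xi> t) (fst (run \<xi> t)) (snd (run \<xi> t)) (fst (hat_run \<xi> t)) (snd (hat_run \<xi> t)),
     hat_v_next t (\<xi> t) (fst (run \<xi> t)) (snd (run \<xi> t)) (fst (hat_run \<xi> t)) (snd (hat_run \<xi> t)))"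

lemma run_hat_run_cong:
  "(\<And>s. s < t \<Longrightarrow> \<xi> s = \<xi>' s) \<Longrightarrow> run \<xi> t = run \<xi>' t \<and> hat_run \<xi> t = hat_run \<xi>' t"
  by (induction t) (simp_all del: apcg_run.simps(2) add: run_Suc)

lemma run_fun_upd: "run (\<xi>(t := i)) t = run \<xi> t" and hat_run_fun_upd: "hat_run (\<xi>(t := i)) t = hat_run \<xi> t"
  using run_hat_run_cong[of t "\<xi>(t := i)" \<xi>] by auto

definition expected_potential :: "nat \<Rightarrow> real" where
  "expected_potential t = (\<Sum>\<xi>\<in>paths t. path_prob p t \<xi> *
     potential t (fst (run \<xi> t)) (snd (run \<xi> t)) (fst (hat_run \<xi> t)))"

lemma expected_potential_Suc_le: "expected_potential (Suc t) \<le> expected_potential t"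
proof -
  have "expected_potential (Suc t) = (\<Sum>\<xi>\<in>paths t. path_prob p t \<xi> * (\<Sum>i\<in>UNIV. p i *
      potential (Suc t) (xnext t (fst (run \<xi> t)) (snd (run \<xi> t)) i) (vnext t (fst (run \<xi> t)) (snd (run \<xi> t)) i)
        (hat_x_next t i (fst (run \<xi> t)) (snd (run \<xi> t)) (fst (hat_run \<xi> t)) (snd (hat_run \<xi> t)))))"
    unfolding expected_potential_def sum_paths_Suc
    by (intro sum.cong refl) (simp del: apcg_run.simps(2)
        add: path_prob_fun_upd run_Suc run_fun_upd hat_run_fun_upd sum_distrib_left algebra_simps)
  also have "\<dots> \<le> expected_potential t"
    unfolding expected_potential_def
    by (intro sum_mono mult_left_mono expected_potential_step path_prob_nonneg less_imp_le[OF p_pos])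
  finally show ?thesis .
qed

lemma expected_potential_le_initial: "expected_potential t \<le> expected_potential 0"
  by (induction t) (auto intro: order_trans[OF expected_potential_Suc_le])

lemma hat_invariant_run:
  assumes j: "P $ j $ j = 1" and init: "As 0 > 0 \<Longrightarrow> \<psi> j 0 \<noteq> \<infinity>"
  shows "hat_invariant t j (fst (run \<xi> t)) (snd (run \<xi> t)) (fst (hat_run \<xi> t)) (snd (hat_run \<xi> t))"
proof (induction t)
  case 0
  have "As 0 > 0 \<Longrightarrow> (0, psi_val j 0) \<in> ereal_epigraph (\<psi> j)"
    using init psi_val_eq[of j 0] by (simp add: ereal_epigraph_def)
  then show ?case
    unfolding hat_invariant_def by (intro impI conjI exI[of _ 1] exI[of _ "(0, psi_val j 0)"])
      (simp_all add: hat_pair_def mu_lower_def)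
next
  case (Suc t)
  then show ?case by (simp del: apcg_run.simps(2) add: run_Suc hat_invariant_Suc[OF j])
qed

lemma hat_run_zero:
  assumes "\<psi> j = (\<lambda>_. 0)"
  shows "fst (hat_run \<xi> t) j = 0 \<and> snd (hat_run \<xi> t) j = 0"
proof (induction t)
  case 0
  show ?case by (simp add: assms psi_val_def)
next
  case (Suc t)
  then show ?case by (cases "\<xi> t = j") (auto simp: assms psi_val_def hat_x_next_def hat_v_next_def hat_w_def)
qed

lemma psi_le_hat_run:
  assumes init: "As 0 > 0 \<Longrightarrow> \<forall>j. \<psi> j 0 \<noteq> \<infinity>" and t: "As t > 0"
  shows "\<psi> j (fst (run \<xi> t) $ j) \<le> ereal (fst (hat_run \<xi> t) j)"
proof (cases "P $ j $ j = 1")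
  case True
  from hat_invariant_run[OF True, of t \<xi>] init t obtain \<mu> u where
    \<mu>: "mu_lower t j \<le> \<mu>" "\<mu> \<le> 1" and u: "hat_pair (snd (run \<xi> t)) (snd (hat_run \<xi> t)) j \<in> ereal_epigraph (\<psi> j)"
      "u \<in> ereal_epigraph (\<psi> j)"
    and x: "hat_pair (fst (run \<xi> t)) (fst (hat_run \<xi> t)) j
      = u + \<mu> *\<^sub>R (hat_pair (snd (run \<xi> t)) (snd (hat_run \<xi> t)) j - u)"
    unfolding hat_invariant_def by blast
  have "hat_pair (fst (run \<xi> t)) (fst (hat_run \<xi> t)) j \<in> ereal_epigraph (\<psi> j)"
    unfolding x using \<mu> mu_lower_pos[of t j]
    by (intro convex_segment_point[OF convex_ereal_epigraph[OF psi_convex] u(2,1)]) auto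
  then show ?thesis by (simp add: hat_pair_def ereal_epigraph_def)
next
  case False
  then have "\<psi> j = (\<lambda>_. 0)" using diag_or_zero by blast
  then show ?thesis using hat_run_zero[of j \<xi> t] by simp
qed

definition objective :: "real^'d \<Rightarrow> ereal" where
  "objective x = ereal (f x) + (\<Sum>i\<in>UNIV. \<psi> i (x $ i))"

lemma objective_finite:
  assumes "\<And>j. \<psi> j (x $ j) \<noteq> \<infinity>"
  shows "objective x = ereal (f x + (\<Sum>j\<in>UNIV. psi_val j (x $ j)))"
  unfolding objective_def using psi_val_eq[OF assms] by simp

lemma objective_theta: "objective \<theta> = ereal F_theta"
  unfolding F_theta_def by (rule objective_finite[OF theta_finite])

lemma objective_le_hat:
  assumes "\<And>j. \<psi> j (x $ j) \<le> ereal (X j)"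
  shows "objective x \<le> ereal (f x + (\<Sum>j\<in>UNIV. X j))"
proof -
  have "(\<Sum>j\<in>UNIV. \<psi> j (x $ j)) \<le> (\<Sum>j\<in>UNIV. ereal (X j))" by (rule sum_mono) (rule assms)
  then have "objective x \<le> ereal (f x) + (\<Sum>j\<in>UNIV. ereal (X j))"
    unfolding objective_def by (rule add_left_mono)
  then show ?thesis by simp
qed

lemma expected_potential_eq:
  "expected_potential t = Bs t * (\<Sum>\<xi>\<in>paths t. path_prob p t \<xi> * sqnorm_P P (snd (run \<xi> t) - \<theta>))
     + 2 * As t * ((\<Sum>\<xi>\<in>paths t. path_prob p t \<xi> * (f (fst (run \<xi> t)) + (\<Sum>j\<in>UNIV. fst (hat_run \<xi> t) j)))
       - F_theta)"
proof -
  let ?pr = "path_prob p t" and ?x = "\<lambda>\<xi>. fst (run \<xi> t)" and ?X = "\<lambda>\<xi>. fst (hat_run \<xi> t)"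
  have "expected_potential t = (\<Sum>\<xi>\<in>paths t. Bs t * (?pr \<xi> * sqnorm_P P (snd (run \<xi> t) - \<theta>))
      + 2 * As t * (?pr \<xi> * (f (?x \<xi>) + (\<Sum>j\<in>UNIV. ?X \<xi> j))) - 2 * As t * F_theta * ?pr \<xi>)"
    unfolding expected_potential_def potential_def by (intro sum.cong refl) (simp add: algebra_simps)
  also have "\<dots> = Bs t * (\<Sum>\<xi>\<in>paths t. ?pr \<xi> * sqnorm_P P (snd (run \<xi> t) - \<theta>))
      + 2 * As t * (\<Sum>\<xi>\<in>paths t. ?pr \<xi> * (f (?x \<xi>) + (\<Sum>j\<in>UNIV. ?X \<xi> j)))
      - 2 * As t * F_theta * (\<Sum>\<xi>\<in>paths t. ?pr \<xi>)"
    by (simp add: sum.distrib sum_subtractf sum_distrib_left)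
  finally show ?thesis by (simp add: sum_path_prob[OF p_sum] algebra_simps)
qed

lemma expected_objective_le_potential:
  assumes init: "As 0 > 0 \<Longrightarrow> \<forall>j. \<psi> j 0 \<noteq> \<infinity>"
  shows "ereal (Bs t * (\<Sum>\<xi>\<in>paths t. path_prob p t \<xi> * sqnorm_P P (snd (run \<xi> t) - \<theta>)))
      + ereal (2 * As t) * ((\<Sum>\<xi>\<in>paths t. ereal (path_prob p t \<xi>) * objective (fst (run \<xi> t))) - objective \<theta>)
    \<le> ereal (expected_potential t)"
proof -
  let ?pr = "path_prob p t" and ?x = "\<lambda>\<xi>. fst (run \<xi> t)" and ?X = "\<lambda>\<xi>. fst (hat_run \<xi> t)"
  define hat_mean where "hat_mean = (\<Sum>\<xi>\<in>paths t. ?pr \<xi> * (f (?x \<xi>) + (\<Sum>j\<in>UNIV. ?X \<xi> j)))"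
  have pr: "?pr \<xi> \<ge> 0" for \<xi> by (rule path_prob_nonneg) (rule less_imp_le[OF p_pos])
  note pot = expected_potential_eq[of t, folded hat_mean_def]
  have bound: "ereal (2 * As t) * ((\<Sum>\<xi>\<in>paths t. ereal (?pr \<xi>) * objective (?x \<xi>)) - objective \<theta>)
      \<le> ereal (2 * As t * (hat_mean - F_theta))"
  proof (cases "As t > 0")
    case True
    have "(\<Sum>\<xi>\<in>paths t. ereal (?pr \<xi>) * objective (?x \<xi>))
        \<le> (\<Sum>\<xi>\<in>paths t. ereal (?pr \<xi>) * ereal (f (?x \<xi>) + (\<Sum>j\<in>UNIV. ?X \<xi> j)))"
      using pr psi_le_hat_run[OF init True] by (intro sum_mono ereal_mult_left_mono objective_le_hat) auto
    then have "(\<Sum>\<xi>\<in>paths t. ereal (?pr \<xi>) * objective (?x \<xi>)) - objective \<theta> \<le> ereal hat_mean - ereal F_theta"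
      unfolding objective_theta hat_mean_def by (intro ereal_minus_mono) simp_all
    then have "ereal (2 * As t) * ((\<Sum>\<xi>\<in>paths t. ereal (?pr \<xi>) * objective (?x \<xi>)) - objective \<theta>)
        \<le> ereal (2 * As t) * ereal (hat_mean - F_theta)"
      using True by (intro ereal_mult_left_mono) simp_all
    then show ?thesis by simp
  next
    case False
    then show ?thesis using As_nonneg[of t] by (simp add: zero_ereal_def[symmetric])
  qed
  show ?thesis unfolding pot
    using add_left_mono[OF bound, of "ereal (Bs t * (\<Sum>\<xi>\<in>paths t. ?pr \<xi> * sqnorm_P P (snd (run \<xi> t) - \<theta>)))"]
    by simp
qed

lemma initial_potential_bound:
  assumes init: "As 0 > 0 \<Longrightarrow> \<forall>j. \<psi> j 0 \<noteq> \<infinity>"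
  shows "ereal (expected_potential 0) \<le> ereal (Bs 0 * (norm (0 - \<theta>))^2) + ereal (2 * As 0) * (objective 0 - objective \<theta>)"
proof -
  have pot: "expected_potential 0
      = Bs 0 * sqnorm_P P (0 - \<theta>) + 2 * As 0 * (f 0 + (\<Sum>j\<in>UNIV. psi_val j 0) - F_theta)"
    by (simp add: expected_potential_def potential_def paths_0 path_prob_def)
  have sq: "Bs 0 * sqnorm_P P (0 - \<theta>) \<le> Bs 0 * (norm (0 - \<theta>))^2"
    using sqnorm_P_le_norm[of "0 - \<theta>"] Bs_pos[of 0] by (intro mult_left_mono) auto
  show ?thesis
  proof (cases "As 0 > 0")
    case True
    then have "objective 0 = ereal (f 0 + (\<Sum>j\<in>UNIV. psi_val j 0))"
      using init objective_finite[of 0] by simp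
    then show ?thesis using sq unfolding pot objective_theta by simp
  next
    case False
    then show ?thesis using sq As_nonneg[of 0] unfolding pot by (simp add: zero_ereal_def[symmetric])
  qed
qed

theorem expected_potential_bound:
  "ereal (Bs t * (\<Sum>\<xi>\<in>paths t. path_prob p t \<xi> * sqnorm_P P (snd (run \<xi> t) - \<theta>)))
     + ereal (2 * As t) * ((\<Sum>\<xi>\<in>paths t. ereal (path_prob p t \<xi>) * objective (fst (run \<xi> t))) - objective \<theta>)
   \<le> ereal (Bs 0 * (norm (0 - \<theta>))^2) + ereal (2 * As 0) * (objective 0 - objective \<theta>)"
proof (cases "As 0 > 0 \<and> (\<exists>j. \<psi> j 0 = \<infinity>)")
  case True
  then have "objective 0 = \<infinity>" by (auto simp: objective_def sum_Pinfty)
  with True show ?thesis by (simp add: objective_theta)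
next
  case False
  then have init: "As 0 > 0 \<Longrightarrow> \<forall>j. \<psi> j 0 \<noteq> \<infinity>" by blast
  from expected_objective_le_potential[OF init, of t] expected_potential_le_initial[of t]
    initial_potential_bound[OF init]
  show ?thesis by (meson ereal_less_eq(3) order_trans)
qed

end

theorem theorem4:
  fixes A :: "real^'d::finite^'m::finite"
    and f :: "real^'d \<Rightarrow> real" and grad :: "real^'d \<Rightarrow> real^'d"
    and \<psi> :: "'d \<Rightarrow> real \<Rightarrow> ereal"
    and \<sigma> S :: real and M p :: "'d \<Rightarrow> real"
    and a As Bs :: "nat \<Rightarrow> real"
    and \<theta> :: "real^'d"
    and F :: "real^'d \<Rightarrow> ereal" and P :: "real^'d^'d" and R :: "'d \<Rightarrow> real"
  defines "P \<equiv> pseudo_inverse A ** A"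
    and "R \<equiv> (\<lambda>i. P $ i $ i)"
    and "F \<equiv> (\<lambda>x. ereal (f x) + (\<Sum>i\<in>UNIV. \<psi> i (x $ i)))"
  assumes grad: "\<And>x. (f has_derivative (\<lambda>h. grad x \<bullet> h)) (at x)"
    and sigma_nonneg: "\<sigma> \<ge> 0"
    and strong: "\<And>x y. f x - f y \<ge> grad y \<bullet> (P *v (x - y)) + \<sigma> / 2 * ((x - y) \<bullet> (P *v (x - y)))"
    and smooth: "\<And>i x h. \<bar>grad (x + h *\<^sub>R axis i 1) $ i - grad x $ i\<bar> \<le> M i * \<bar>h\<bar>"
    and psi_convex: "\<And>i. convex_ext (\<psi> i)"
    and prox_exists: "\<And>i \<eta> z. \<eta> > 0 \<Longrightarrow> \<exists>v. is_prox \<eta> (\<psi> i) z v"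
    and R_or_zero: "\<And>i. R i = 1 \<or> \<psi> i = (\<lambda>_. 0)"
    and p_pos: "\<And>i. p i > 0" and p_sum: "(\<Sum>i\<in>UNIV. p i) = 1"
    and A0: "As 0 \<ge> 0" and B0: "Bs 0 > 0" and S_pos: "S > 0"
    and a_pos: "\<And>t. a (Suc t) > 0"
    and a_eq: "\<And>t. (a (Suc t))^2 * S^2 = As (Suc t) * Bs (Suc t)"
    and As_rec: "\<And>t. As (Suc t) = As t + a (Suc t)"
    and Bs_rec: "\<And>t. Bs (Suc t) = Bs t + \<sigma> * a (Suc t)"
    and minimizer: "\<And>x. F \<theta> \<le> F x" and finite_min: "F \<theta> \<noteq> \<infinity>"
    and S_cond: "\<And>i. S^2 \<ge> M i * R i / (p i)^2"
    and step_cond: "\<And>i t. 1 - \<sigma> * a (Suc t) / Bs (Suc t) - (a (Suc t) / As (Suc t)) * R i / p i \<ge> 0"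
  shows "ereal (Bs t * (\<Sum>\<omega>\<in>paths t. path_prob p t \<omega> *
              sqnorm_P P (snd (apcg_run grad P p \<psi> a As Bs \<sigma> \<omega> t) - \<theta>)))
         + ereal (2 * As t) *
           ((\<Sum>\<omega>\<in>paths t. ereal (path_prob p t \<omega>) * F (fst (apcg_run grad P p \<psi> a As Bs \<sigma> \<omega> t)))
            - F \<theta>)
         \<le> ereal (Bs 0 * (norm ((0::real^'d) - \<theta>))^2) + ereal (2 * As 0) * (F 0 - F \<theta>)"
proof -
  have "\<psi> i (\<theta> $ i) \<noteq> \<infinity>" for i
    using finite_min unfolding \<open>F \<equiv> _\<close> by (auto simp: sum_Pinfty)
  then interpret apcg \<sigma> S a As Bs P f grad \<psi> M p \<theta>
    using grad sigma_nonneg strong smooth psi_convex prox_exists R_or_zero p_pos p_sum A0 B0 S_pos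
      a_pos a_eq As_rec Bs_rec S_cond step_cond orthogonal_projector_pseudo_inverse_mult[of A]
    unfolding \<open>P \<equiv> _\<close> \<open>R \<equiv> _\<close> orthogonal_projector_def
    by unfold_locales auto
  have "F = objective" unfolding \<open>F \<equiv> _\<close> objective_def ..
  with expected_potential_bound[of t] show ?thesis by simp
qed

end
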